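(* Let $H$ be a Hopf algebra over $\mathbb C$ with comultiplication $\Delta$, counit $\epsilon$ and antipode $S$, and let $G$ be a finite subgroup of the group $G(H)$ of group-like elements of $H$ contained in the center of $H$. Let $\omega$ be a normalized $3$-cocycle on $G$ with values in $\mathbb C^\times$ and $j\colon G\to\hat G$ a group isomorphism. Then $H_{(G,\omega,j)}=(H,\Delta,\epsilon,\phi,\alpha,\beta,S)$ with $$\phi=\sum_{x,y,z\in G}\omega(x,y,z)^{-1}e_x\otimes e_y\otimes e_z,\qquad \alpha=1,\qquad\beta=\sum_{x\in G}\omega(x,x^{-1},x)e_x$$ is a quasi-Hopf algebra. Moreover, if $\omega'$ is a normalized $3$-cocycle cohomologous to $\omega$, then $H_{(G,\omega,j)}$ and $H_{(G,\omega',j)}$ are gauge equivalent quasi-Hopf algebras.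
   Context: $\hat G$ is the group of linear characters $G\to\mathbb C^\times$. For $x\in G$, $e_x=\frac{1}{|G|}\sum_{y\in G}j(y)(x)^{-1}y\in\mathbb C[G]\subseteq H$. A quasi-Hopf algebra is $(H,\Delta,\epsilon,\phi,\alpha,\beta,S)$ with $\Delta,\epsilon$ algebra maps, $\phi$ invertible satisfying the pentagon identity and $(\mathrm{id}\otimes\epsilon\otimes\mathrm{id})(\phi)=1\otimes1$, counit axioms, $\phi(\Delta\otimes\mathrm{id})\Delta(h)=(\mathrm{id}\otimes\Delta)\Delta(h)\phi$, $S$ an anti-algebra automorphism, $S(h_{(1)})\alpha h_{(2)}=\epsilon(h)\alpha$, $h_{(1)}\beta S(h_{(2)})=\epsilon(h)\beta$, $\phi^{(1)}\beta S(\phi^{(2)})\alpha\phi^{(3)}=1$, $S(\phi^{(-1)})\alpha\phi^{(-2)}\beta S(\phi^{(-3)})=1$. Gauge equivalence: $A$ and $B$ are gauge equivalent if $A\cong B^F$ as quasi-bialgebras for some gauge transformation $F$ on $B$ (invertible $F\in B\otimes B$ with $(\epsilon\otimes\mathrm{id})(F)=1=(\mathrm{id}\otimes\epsilon)(F)$, $\Delta^F=F\Delta F^{-1}$, $\phi^F=(1\otimes F)(\mathrm{id}\otimes\Delta)(F)\phi(\Delta\otimes\mathrm{id})(F^{-1})(F^{-1}\otimes1)$). A $3$-cocycle is normalized if it equals $1$ whenever an argument is $1$.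
   Formalization: The Hopf algebra H is additionally assumed to have a bijective antipode S. The statement above fails without it. *)

theory Defs
  imports Complex_Main
begin

text \<open>A complex vector space is modelled by a chosen basis (a type 'x): vectors are
finitely supported functions 'x => complex.  Tensor products of such spaces are
modelled on product bases; multilinear maps are given on basis elements and
extended linearly.  Triple tensors use the basis 'x * ('x * 'x).\<close>

type_synonym 'x vec = "'x \<Rightarrow> complex"

definition supp :: "'x vec \<Rightarrow> 'x set" where
  "supp v = {x. v x \<noteq> 0}"

definition fsupp :: "'x vec \<Rightarrow> bool" where
  "fsupp v \<longleftrightarrow> finite (supp v)"

definition basis :: "'x \<Rightarrow> 'x vec" where
  "basis x = (\<lambda>y. if y = x then 1 else 0)"

definition scal :: "complex \<Rightarrow> 'x vec \<Rightarrow> 'x vec" where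
  "scal c v = (\<lambda>y. c * v y)"

definition lin :: "('x \<Rightarrow> 'y vec) \<Rightarrow> 'x vec \<Rightarrow> 'y vec" where
  "lin T v = (\<lambda>y. \<Sum>x\<in>supp v. v x * T x y)"

definition linf :: "('x \<Rightarrow> complex) \<Rightarrow> 'x vec \<Rightarrow> complex" where
  "linf f v = (\<Sum>x\<in>supp v. v x * f x)"

definition bil :: "('x \<Rightarrow> 'y \<Rightarrow> 'z vec) \<Rightarrow> 'x vec \<Rightarrow> 'y vec \<Rightarrow> 'z vec" where
  "bil B v w = (\<lambda>z. \<Sum>x\<in>supp v. \<Sum>y\<in>supp w. v x * w y * B x y z)"

definition tens :: "'x vec \<Rightarrow> 'y vec \<Rightarrow> ('x \<times> 'y) vec" where
  "tens v w = (\<lambda>(x, y). v x * w y)"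

definition maptens :: "('a \<Rightarrow> 'c vec) \<Rightarrow> ('b \<Rightarrow> 'd vec) \<Rightarrow> ('a \<times> 'b) \<Rightarrow> ('c \<times> 'd) vec" where
  "maptens T1 T2 = (\<lambda>(a, b). tens (T1 a) (T2 b))"

definition tmult :: "('a \<Rightarrow> 'a \<Rightarrow> 'a vec) \<Rightarrow> ('b \<Rightarrow> 'b \<Rightarrow> 'b vec)
    \<Rightarrow> ('a \<times> 'b) \<Rightarrow> ('a \<times> 'b) \<Rightarrow> ('a \<times> 'b) vec" where
  "tmult M N = (\<lambda>(x1, x2) (y1, y2). tens (M x1 y1) (N x2 y2))"

abbreviation M2 where "M2 M \<equiv> tmult M M"
abbreviation M3 where "M3 M \<equiv> tmult M (tmult M M)"
abbreviation M4 where "M4 M \<equiv> tmult M (tmult M (tmult M M))"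

definition lin_bij :: "('x \<Rightarrow> 'x vec) \<Rightarrow> bool" where
  "lin_bij T \<longleftrightarrow> (\<forall>x. fsupp (T x)) \<and> bij_betw (lin T) {v. fsupp v} {v. fsupp v}"

definition is_algebra :: "('x \<Rightarrow> 'x \<Rightarrow> 'x vec) \<Rightarrow> 'x vec \<Rightarrow> bool" where
  "is_algebra M u \<longleftrightarrow> (\<forall>x y. fsupp (M x y)) \<and> fsupp u
     \<and> (\<forall>x y z. bil M (M x y) (basis z) = bil M (basis x) (M y z))
     \<and> (\<forall>x. bil M u (basis x) = basis x \<and> bil M (basis x) u = basis x)"

definition D_id :: "('x \<Rightarrow> ('x \<times> 'x) vec) \<Rightarrow> ('x \<times> 'x) \<Rightarrow> ('x \<times> 'x \<times> 'x) vec" where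
  "D_id D = (\<lambda>(a, b) (p, q, r). if r = b then D a (p, q) else 0)"

definition id_D :: "('x \<Rightarrow> ('x \<times> 'x) vec) \<Rightarrow> ('x \<times> 'x) \<Rightarrow> ('x \<times> 'x \<times> 'x) vec" where
  "id_D D = (\<lambda>(a, b) (p, q, r). if p = a then D b (q, r) else 0)"

definition idDid :: "('x \<Rightarrow> ('x \<times> 'x) vec) \<Rightarrow> ('x \<times> 'x \<times> 'x) \<Rightarrow> ('x \<times> 'x \<times> 'x \<times> 'x) vec" where
  "idDid D = (\<lambda>(a, b, c) (p, q, r, s). if p = a \<and> s = c then D b (q, r) else 0)"

definition iidD :: "('x \<Rightarrow> ('x \<times> 'x) vec) \<Rightarrow> ('x \<times> 'x \<times> 'x) \<Rightarrow> ('x \<times> 'x \<times> 'x \<times> 'x) vec" where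
  "iidD D = (\<lambda>(a, b, c) (p, q, r, s). if p = a \<and> q = b then D c (r, s) else 0)"

definition Diid :: "('x \<Rightarrow> ('x \<times> 'x) vec) \<Rightarrow> ('x \<times> 'x \<times> 'x) \<Rightarrow> ('x \<times> 'x \<times> 'x \<times> 'x) vec" where
  "Diid D = (\<lambda>(a, b, c) (p, q, r, s). if r = b \<and> s = c then D a (p, q) else 0)"

text \<open>Quasi-bialgebra data without (quasi-)coassociativity: H an algebra,
Delta and epsilon algebra maps, counit axioms.\<close>
definition is_qb_base :: "('x \<Rightarrow> 'x \<Rightarrow> 'x vec) \<Rightarrow> 'x vec \<Rightarrow> ('x \<Rightarrow> ('x \<times> 'x) vec)
    \<Rightarrow> ('x \<Rightarrow> complex) \<Rightarrow> bool" where
  "is_qb_base M u D e \<longleftrightarrow> is_algebra M u \<and> (\<forall>x. fsupp (D x))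
     \<and> (\<forall>x y. lin D (M x y) = bil (M2 M) (D x) (D y)) \<and> lin D u = tens u u
     \<and> (\<forall>x y. linf e (M x y) = e x * e y) \<and> linf e u = 1
     \<and> (\<forall>x. lin (\<lambda>(a, b). scal (e a) (basis b)) (D x) = basis x)
     \<and> (\<forall>x. lin (\<lambda>(a, b). scal (e b) (basis a)) (D x) = basis x)"

definition is_hopf :: "('x \<Rightarrow> 'x \<Rightarrow> 'x vec) \<Rightarrow> 'x vec \<Rightarrow> ('x \<Rightarrow> ('x \<times> 'x) vec)
    \<Rightarrow> ('x \<Rightarrow> complex) \<Rightarrow> ('x \<Rightarrow> 'x vec) \<Rightarrow> bool" where
  "is_hopf M u D e S \<longleftrightarrow> is_qb_base M u D e
     \<and> (\<forall>x. lin (D_id D) (D x) = lin (id_D D) (D x))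
     \<and> (\<forall>x. fsupp (S x))
     \<and> (\<forall>x. lin (\<lambda>(a, b). bil M (S a) (basis b)) (D x) = scal (e x) u)
     \<and> (\<forall>x. lin (\<lambda>(a, b). bil M (basis a) (S b)) (D x) = scal (e x) u)"

definition grouplike :: "('x \<Rightarrow> ('x \<times> 'x) vec) \<Rightarrow> 'x vec \<Rightarrow> bool" where
  "grouplike D g \<longleftrightarrow> fsupp g \<and> g \<noteq> (\<lambda>_. 0) \<and> lin D g = tens g g"

definition finite_central_subgroup :: "('x \<Rightarrow> 'x \<Rightarrow> 'x vec) \<Rightarrow> 'x vec
    \<Rightarrow> ('x \<Rightarrow> ('x \<times> 'x) vec) \<Rightarrow> 'x vec set \<Rightarrow> bool" where
  "finite_central_subgroup M u D G \<longleftrightarrow> finite G \<and> (\<forall>g\<in>G. grouplike D g) \<and> u \<in> G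
     \<and> (\<forall>g\<in>G. \<forall>h\<in>G. bil M g h \<in> G) \<and> (\<forall>g\<in>G. \<exists>h\<in>G. bil M g h = u)
     \<and> (\<forall>g\<in>G. \<forall>x. bil M g (basis x) = bil M (basis x) g)"

definition ginv :: "('x \<Rightarrow> 'x \<Rightarrow> 'x vec) \<Rightarrow> 'x vec \<Rightarrow> 'x vec set \<Rightarrow> 'x vec \<Rightarrow> 'x vec" where
  "ginv M u G g = (THE h. h \<in> G \<and> bil M g h = u)"

definition normalized_3cocycle :: "('x \<Rightarrow> 'x \<Rightarrow> 'x vec) \<Rightarrow> 'x vec \<Rightarrow> 'x vec set
    \<Rightarrow> ('x vec \<Rightarrow> 'x vec \<Rightarrow> 'x vec \<Rightarrow> complex) \<Rightarrow> bool" where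
  "normalized_3cocycle M u G w \<longleftrightarrow>
     (\<forall>x\<in>G. \<forall>y\<in>G. \<forall>z\<in>G. w x y z \<noteq> 0)
     \<and> (\<forall>x\<in>G. \<forall>y\<in>G. \<forall>z\<in>G. \<forall>t\<in>G.
          w y z t * w x (bil M y z) t * w x y z = w (bil M x y) z t * w x y (bil M z t))
     \<and> (\<forall>x\<in>G. \<forall>y\<in>G. w u x y = 1 \<and> w x u y = 1 \<and> w x y u = 1)"

definition cohomologous :: "('x \<Rightarrow> 'x \<Rightarrow> 'x vec) \<Rightarrow> 'x vec set
    \<Rightarrow> ('x vec \<Rightarrow> 'x vec \<Rightarrow> 'x vec \<Rightarrow> complex) \<Rightarrow> ('x vec \<Rightarrow> 'x vec \<Rightarrow> 'x vec \<Rightarrow> complex) \<Rightarrow> bool" where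
  "cohomologous M G w w' \<longleftrightarrow> (\<exists>f :: 'x vec \<Rightarrow> 'x vec \<Rightarrow> complex.
     (\<forall>x\<in>G. \<forall>y\<in>G. f x y \<noteq> 0)
     \<and> (\<forall>x\<in>G. \<forall>y\<in>G. \<forall>z\<in>G. w' x y z =
          w x y z * (f y z * f x (bil M y z)) / (f (bil M x y) z * f x y)))"

text \<open>Linear characters G -> C^x (only their values on G matter).\<close>
definition is_char :: "('x \<Rightarrow> 'x \<Rightarrow> 'x vec) \<Rightarrow> 'x vec set \<Rightarrow> ('x vec \<Rightarrow> complex) \<Rightarrow> bool" where
  "is_char M G \<chi> \<longleftrightarrow> (\<forall>g\<in>G. \<chi> g \<noteq> 0) \<and> (\<forall>g\<in>G. \<forall>h\<in>G. \<chi> (bil M g h) = \<chi> g * \<chi> h)"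

text \<open>j : G -> G^ a group isomorphism; j y x is the value of the character j(y) at x.\<close>
definition char_iso :: "('x \<Rightarrow> 'x \<Rightarrow> 'x vec) \<Rightarrow> 'x vec set \<Rightarrow> ('x vec \<Rightarrow> 'x vec \<Rightarrow> complex) \<Rightarrow> bool" where
  "char_iso M G j \<longleftrightarrow> (\<forall>y\<in>G. is_char M G (j y))
     \<and> (\<forall>y\<in>G. \<forall>z\<in>G. \<forall>x\<in>G. j (bil M y z) x = j y x * j z x)
     \<and> (\<forall>y\<in>G. \<forall>z\<in>G. (\<forall>x\<in>G. j y x = j z x) \<longrightarrow> y = z)
     \<and> (\<forall>\<chi>. is_char M G \<chi> \<longrightarrow> (\<exists>y\<in>G. \<forall>x\<in>G. j y x = \<chi> x))"

definition idem :: "'x vec set \<Rightarrow> ('x vec \<Rightarrow> 'x vec \<Rightarrow> complex) \<Rightarrow> 'x vec \<Rightarrow> 'x vec" where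
  "idem G j x = (\<lambda>p. (1 / of_nat (card G)) * (\<Sum>y\<in>G. inverse (j y x) * y p))"

definition phi_G :: "'x vec set \<Rightarrow> ('x vec \<Rightarrow> 'x vec \<Rightarrow> 'x vec \<Rightarrow> complex)
    \<Rightarrow> ('x vec \<Rightarrow> 'x vec \<Rightarrow> complex) \<Rightarrow> ('x \<times> 'x \<times> 'x) vec" where
  "phi_G G w j = (\<lambda>(p, q, r). \<Sum>x\<in>G. \<Sum>y\<in>G. \<Sum>z\<in>G.
      inverse (w x y z) * idem G j x p * idem G j y q * idem G j z r)"

definition beta_G :: "('x \<Rightarrow> 'x \<Rightarrow> 'x vec) \<Rightarrow> 'x vec \<Rightarrow> 'x vec set
    \<Rightarrow> ('x vec \<Rightarrow> 'x vec \<Rightarrow> 'x vec \<Rightarrow> complex) \<Rightarrow> ('x vec \<Rightarrow> 'x vec \<Rightarrow> complex) \<Rightarrow> 'x vec" where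
  "beta_G M u G w j = (\<lambda>p. \<Sum>x\<in>G. w x (ginv M u G x) x * idem G j x p)"

definition is_quasi_hopf :: "('x \<Rightarrow> 'x \<Rightarrow> 'x vec) \<Rightarrow> 'x vec \<Rightarrow> ('x \<Rightarrow> ('x \<times> 'x) vec)
    \<Rightarrow> ('x \<Rightarrow> complex) \<Rightarrow> ('x \<times> 'x \<times> 'x) vec \<Rightarrow> 'x vec \<Rightarrow> 'x vec \<Rightarrow> ('x \<Rightarrow> 'x vec) \<Rightarrow> bool" where
  "is_quasi_hopf M u D e \<phi> \<alpha> \<beta> S \<longleftrightarrow> is_qb_base M u D e
     \<and> fsupp \<phi> \<and> fsupp \<alpha> \<and> fsupp \<beta>
     \<comment> \<open>pentagon\<close>
     \<and> bil (M4 M) (bil (M4 M) (\<lambda>(p, q, r, s). u p * \<phi> (q, r, s)) (lin (idDid D) \<phi>))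
           (\<lambda>(p, q, r, s). \<phi> (p, q, r) * u s)
        = bil (M4 M) (lin (iidD D) \<phi>) (lin (Diid D) \<phi>)
     \<comment> \<open>(id (x) eps (x) id)(phi) = 1 (x) 1\<close>
     \<and> lin (\<lambda>(a, b, c). scal (e b) (basis (a, c))) \<phi> = tens u u
     \<comment> \<open>quasi-coassociativity\<close>
     \<and> (\<forall>h. bil (M3 M) \<phi> (lin (D_id D) (D h)) = bil (M3 M) (lin (id_D D) (D h)) \<phi>)
     \<comment> \<open>S anti-algebra automorphism\<close>
     \<and> lin_bij S \<and> (\<forall>x y. lin S (M x y) = bil M (S y) (S x)) \<and> lin S u = u
     \<and> (\<forall>h. lin (\<lambda>(a, b). bil M (bil M (S a) \<alpha>) (basis b)) (D h) = scal (e h) \<alpha>)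
     \<and> (\<forall>h. lin (\<lambda>(a, b). bil M (bil M (basis a) \<beta>) (S b)) (D h) = scal (e h) \<beta>)
     \<and> lin (\<lambda>(a, b, c). bil M (bil M (bil M (bil M (basis a) \<beta>) (S b)) \<alpha>) (basis c)) \<phi> = u
     \<comment> \<open>phi invertible, with inverse psi satisfying the last axiom\<close>
     \<and> (\<exists>\<psi>. fsupp \<psi> \<and> bil (M3 M) \<phi> \<psi> = tens u (tens u u) \<and> bil (M3 M) \<psi> \<phi> = tens u (tens u u)
          \<and> lin (\<lambda>(a, b, c). bil M (bil M (bil M (bil M (S a) \<alpha>) (basis b)) \<beta>) (S c)) \<psi> = u)"

definition twist_D :: "('x \<Rightarrow> 'x \<Rightarrow> 'x vec) \<Rightarrow> ('x \<Rightarrow> ('x \<times> 'x) vec)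
    \<Rightarrow> ('x \<times> 'x) vec \<Rightarrow> ('x \<times> 'x) vec \<Rightarrow> 'x \<Rightarrow> ('x \<times> 'x) vec" where
  "twist_D M D F Finv h = bil (M2 M) (bil (M2 M) F (D h)) Finv"

definition twist_phi :: "('x \<Rightarrow> 'x \<Rightarrow> 'x vec) \<Rightarrow> 'x vec \<Rightarrow> ('x \<Rightarrow> ('x \<times> 'x) vec)
    \<Rightarrow> ('x \<times> 'x \<times> 'x) vec \<Rightarrow> ('x \<times> 'x) vec \<Rightarrow> ('x \<times> 'x) vec \<Rightarrow> ('x \<times> 'x \<times> 'x) vec" where
  "twist_phi M u D \<phi> F Finv =
     bil (M3 M) (bil (M3 M) (bil (M3 M) (bil (M3 M) (\<lambda>(p, q, r). u p * F (q, r)) (lin (id_D D) F))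
        \<phi>) (lin (D_id D) Finv)) (\<lambda>(p, q, r). Finv (p, q) * u r)"

definition gauge_transf :: "('x \<Rightarrow> 'x \<Rightarrow> 'x vec) \<Rightarrow> 'x vec \<Rightarrow> ('x \<Rightarrow> complex)
    \<Rightarrow> ('x \<times> 'x) vec \<Rightarrow> ('x \<times> 'x) vec \<Rightarrow> bool" where
  "gauge_transf M u e F Finv \<longleftrightarrow> fsupp F \<and> fsupp Finv
     \<and> bil (M2 M) F Finv = tens u u \<and> bil (M2 M) Finv F = tens u u
     \<and> lin (\<lambda>(a, b). scal (e a) (basis b)) F = u
     \<and> lin (\<lambda>(a, b). scal (e b) (basis a)) F = u"

definition gauge_equiv :: "('x \<Rightarrow> 'x \<Rightarrow> 'x vec) \<Rightarrow> 'x vec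
    \<Rightarrow> ('x \<Rightarrow> ('x \<times> 'x) vec) \<Rightarrow> ('x \<Rightarrow> complex) \<Rightarrow> ('x \<times> 'x \<times> 'x) vec
    \<Rightarrow> ('x \<Rightarrow> ('x \<times> 'x) vec) \<Rightarrow> ('x \<Rightarrow> complex) \<Rightarrow> ('x \<times> 'x \<times> 'x) vec \<Rightarrow> bool" where
  "gauge_equiv M u DA eA \<phi>A DB eB \<phi>B \<longleftrightarrow>
     (\<exists>F Finv (f :: 'x \<Rightarrow> 'x vec). gauge_transf M u eB F Finv
        \<and> lin_bij f \<and> (\<forall>x y. lin f (M x y) = bil M (f x) (f y)) \<and> lin f u = u
        \<and> (\<forall>h. lin (maptens f f) (DA h) = lin (twist_D M DB F Finv) (f h))
        \<and> (\<forall>h. linf eB (f h) = eA h)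
        \<and> lin (maptens f (maptens f f)) \<phi>A = twist_phi M u DB \<phi>B F Finv)"

end

theory Submission
  imports Defs
begin

text \<open>By orthogonality of the characters j(y), the elements e_x (x in G) form a complete
family of orthogonal idempotents of H; they are central because G is, and
Delta(e_x) = sum_{ab = x} e_a (x) e_b, epsilon(e_x) = [x = 1], S(e_x) = e_{x^-1}.  Hence phi,
beta and every tensor assembled from the e_x are central and multiply coefficientwise in
the basis e_x (x) e_y (x) ...  Quasi-coassociativity then follows from coassociativity of
Delta; coefficientwise, the pentagon axiom is the 3-cocycle identity, while the counit and
antipode axioms reduce to the normalisation of omega together with
omega(x, x^-1, x) omega(x^-1, x, x^-1) = 1.  If omega' = omega * df, the central element
F = sum_{x,y} f(x,y)/f(1,1) e_x (x) e_y is a gauge transformation; being central it leaves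
Delta unchanged, and it twists phi' into phi, so the identity map is the required
isomorphism.\<close>

section \<open>Finitely supported vectors and linear maps\<close>

definition lincomb :: "'i set \<Rightarrow> ('i \<Rightarrow> complex) \<Rightarrow> ('i \<Rightarrow> 'x vec) \<Rightarrow> 'x vec" where
  "lincomb A c V = (\<lambda>p. \<Sum>i\<in>A. c i * V i p)"

lemma lin_eq_lincomb: "lin T v = lincomb (supp v) v T"
  by (simp add: lin_def lincomb_def)

lemma lin_eq_lincomb_superset:
  assumes "finite A" "supp v \<subseteq> A"
  shows "lin T v = lincomb A v T"
  unfolding lin_def lincomb_def
proof (rule ext)
  fix y
  show "(\<Sum>x\<in>supp v. v x * T x y) = (\<Sum>x\<in>A. v x * T x y)"
    by (rule sum.mono_neutral_left) (use assms in \<open>auto simp: supp_def\<close>)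
qed

lemma supp_lincomb: "supp (lincomb A c V) \<subseteq> (\<Union>i\<in>A. supp (V i))"
  by (auto simp: supp_def lincomb_def intro: ccontr)

lemma fsupp_lincomb: "finite A \<Longrightarrow> (\<forall>i\<in>A. fsupp (V i)) \<Longrightarrow> fsupp (lincomb A c V)"
  unfolding fsupp_def by (rule finite_subset[OF supp_lincomb]) auto

lemma supp_basis [simp]: "supp (basis x) = {x}"
  by (auto simp: supp_def basis_def)

lemma fsupp_basis [simp]: "fsupp (basis x)"
  by (simp add: fsupp_def)

lemma basis_self [simp]: "basis x x = 1"
  by (simp add: basis_def)

lemma lin_basis [simp]: "lin T (basis x) = T x"
  by (simp add: lin_def)

lemma linf_basis [simp]: "linf f (basis x) = f x"
  by (simp add: linf_def)

lemma lin_lincomb: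
  assumes "finite A" "\<forall>i\<in>A. fsupp (V i)"
  shows "lin T (lincomb A c V) = lincomb A c (\<lambda>i. lin T (V i))"
proof -
  define B where "B = (\<Union>i\<in>A. supp (V i))"
  have fB: "finite B" using assms by (auto simp: B_def fsupp_def)
  have "lin T (lincomb A c V) = lincomb B (lincomb A c V) T"
    by (rule lin_eq_lincomb_superset[OF fB]) (use supp_lincomb[of A c V] in \<open>auto simp: B_def\<close>)
  also have "\<dots> = lincomb A c (\<lambda>i. lincomb B (V i) T)"
    unfolding lincomb_def sum_distrib_right sum_distrib_left mult.assoc by (rule ext, rule sum.swap)
  also have "\<dots> = lincomb A c (\<lambda>i. lin T (V i))"
    unfolding lincomb_def
    by (intro ext sum.cong refl) (subst lin_eq_lincomb_superset[OF fB], auto simp: B_def lincomb_def)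
  finally show ?thesis .
qed

lemma linf_eq_lin: "linf f v = lin (\<lambda>x (_::unit). f x) v ()"
  by (simp add: linf_def lin_def)

lemma linf_lincomb:
  assumes "finite A" "\<forall>i\<in>A. fsupp (V i)"
  shows "linf f (lincomb A c V) = (\<Sum>i\<in>A. c i * linf f (V i))"
  using assms by (simp add: linf_eq_lin lin_lincomb) (simp add: lincomb_def)

lemma fsupp_lin [intro]: "fsupp v \<Longrightarrow> (\<And>x. fsupp (T x)) \<Longrightarrow> fsupp (lin T v)"
  unfolding lin_eq_lincomb by (intro fsupp_lincomb) (auto simp: fsupp_def)

lemma fsupp_zero [simp]: "fsupp (\<lambda>p. 0)"
  by (simp add: fsupp_def supp_def)

lemma fsupp_add: "fsupp v \<Longrightarrow> fsupp w \<Longrightarrow> fsupp (\<lambda>p. v p + w p)"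
  unfolding fsupp_def supp_def
  by (rule finite_subset[of _ "{x. v x \<noteq> 0} \<union> {x. w x \<noteq> 0}"]) auto

lemma fsupp_smult: "fsupp v \<Longrightarrow> fsupp (\<lambda>p. c * v p)"
  unfolding fsupp_def supp_def by (rule finite_subset[of _ "{x. v x \<noteq> 0}"]) auto

lemma fsupp_scal [intro]: "fsupp v \<Longrightarrow> fsupp (scal c v)"
  unfolding scal_def by (rule fsupp_smult)

lemma scal_one [simp]: "scal 1 v = v"
  by (simp add: scal_def)

lemma scal_scal: "scal a (scal b v) = scal (a * b) v"
  by (simp add: scal_def mult.assoc)

text \<open>Linearity is only required on finitely supported vectors, the domain of lin.\<close>
definition fsupp_linear :: "('x vec \<Rightarrow> 'y vec) \<Rightarrow> bool" where
  "fsupp_linear L \<longleftrightarrow> (\<forall>v w. fsupp v \<longrightarrow> fsupp w \<longrightarrow> L (\<lambda>p. v p + w p) = (\<lambda>q. L v q + L w q))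
     \<and> (\<forall>c v. fsupp v \<longrightarrow> L (\<lambda>p. c * v p) = (\<lambda>q. c * L v q))"

lemma fsupp_linear_zero: "fsupp_linear L \<Longrightarrow> L (\<lambda>p. 0) = (\<lambda>q. 0)"
proof -
  assume "fsupp_linear L"
  then have "L (\<lambda>p. 0 * (\<lambda>p. 0) p) = (\<lambda>q. 0 * L (\<lambda>p. 0) q)"
    unfolding fsupp_linear_def using fsupp_zero by blast
  then show ?thesis by simp
qed

lemma fsupp_linear_lincomb:
  assumes L: "fsupp_linear L" and "finite A" "\<forall>i\<in>A. fsupp (V i)"
  shows "L (lincomb A c V) = lincomb A c (\<lambda>i. L (V i))"
  using assms(2,3)
proof (induction A rule: finite_induct)
  case empty
  then show ?case using fsupp_linear_zero[OF L] by (simp add: lincomb_def)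
next
  case (insert i A)
  have split: "lincomb (insert i A) c V = (\<lambda>p. (\<lambda>p. c i * V i p) p + lincomb A c V p)"
    using insert by (simp add: lincomb_def)
  have "fsupp (\<lambda>p. c i * V i p)" "fsupp (lincomb A c V)"
    using insert by (auto intro: fsupp_smult fsupp_lincomb)
  then have "L (lincomb (insert i A) c V) = (\<lambda>q. L (\<lambda>p. c i * V i p) q + L (lincomb A c V) q)"
    unfolding split using L by (simp add: fsupp_linear_def)
  also have "\<dots> = (\<lambda>q. c i * L (V i) q + lincomb A c (\<lambda>i. L (V i)) q)"
    using L insert by (simp add: fsupp_linear_def)
  also have "\<dots> = lincomb (insert i A) c (\<lambda>i. L (V i))"
    using insert by (simp add: lincomb_def)
  finally show ?case .
qed

lemma lincomb_supp_basis: "fsupp v \<Longrightarrow> lincomb (supp v) v basis = v"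
  unfolding lincomb_def basis_def fsupp_def
  by (rule ext) (simp add: if_distrib sum.delta' cong: if_cong, simp add: supp_def)

lemma lin_basis_self: "fsupp v \<Longrightarrow> lin basis v = v"
  by (simp add: lin_eq_lincomb lincomb_supp_basis)

lemma fsupp_linear_eq_lin:
  assumes "fsupp_linear L" "fsupp v"
  shows "L v = lin (\<lambda>x. L (basis x)) v"
proof -
  have "L v = L (lincomb (supp v) v basis)" by (simp add: lincomb_supp_basis assms)
  also have "\<dots> = lincomb (supp v) v (\<lambda>x. L (basis x))"
    using assms by (intro fsupp_linear_lincomb) (auto simp: fsupp_def)
  finally show ?thesis by (simp add: lin_eq_lincomb)
qed

lemma fsupp_linear_eqI:
  assumes "fsupp_linear L1" "fsupp_linear L2" "\<And>x. L1 (basis x) = L2 (basis x)" "fsupp v"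
  shows "L1 v = L2 v"
  using fsupp_linear_eq_lin[OF assms(1,4)] fsupp_linear_eq_lin[OF assms(2,4)] assms(3) by simp

lemma fsupp_linear_lin [intro]: "fsupp_linear (lin T)"
proof -
  have "lin T (\<lambda>p. v p + w p) = (\<lambda>q. lin T v q + lin T w q)" if "fsupp v" "fsupp w" for v w
  proof -
    define B where "B = supp v \<union> supp w"
    have fB: "finite B" using that by (auto simp: B_def fsupp_def)
    have "supp (\<lambda>p. v p + w p) \<subseteq> B" by (auto simp: B_def supp_def)
    then show ?thesis
      using lin_eq_lincomb_superset[OF fB, of _ T] by (auto simp: B_def lincomb_def sum.distrib distrib_right)
  qed
  moreover have "lin T (\<lambda>p. c * v p) = (\<lambda>q. c * lin T v q)" if "fsupp v" for c v
  proof -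
    have fB: "finite (supp v)" using that by (auto simp: fsupp_def)
    have "supp (\<lambda>p. c * v p) \<subseteq> supp v" by (auto simp: supp_def)
    then show ?thesis
      using lin_eq_lincomb_superset[OF fB, of _ T] by (auto simp: lincomb_def sum_distrib_left mult.assoc)
  qed
  ultimately show ?thesis by (simp add: fsupp_linear_def)
qed

lemma fsupp_linear_comp:
  assumes "fsupp_linear L1" "fsupp_linear L2" "\<And>v. fsupp v \<Longrightarrow> fsupp (L2 v)"
  shows "fsupp_linear (\<lambda>v. L1 (L2 v))"
  using assms unfolding fsupp_linear_def by (simp add: fsupp_add fsupp_smult)

lemma fsupp_linear_scal [intro]: "fsupp_linear (scal c)"
  by (simp add: fsupp_linear_def scal_def algebra_simps)

lemma fsupp_linear_lin_commute:
  assumes "fsupp_linear L" "fsupp v" "\<forall>x\<in>supp v. fsupp (T x)"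
  shows "L (lin T v) = lin (\<lambda>x. L (T x)) v"
  unfolding lin_eq_lincomb using assms by (subst fsupp_linear_lincomb) (auto simp: fsupp_def)

lemma lin_lin:
  assumes "fsupp v" "\<forall>z\<in>supp v. fsupp (U z)"
  shows "lin T (lin U v) = lin (\<lambda>z. lin T (U z)) v"
  using fsupp_linear_lin_commute[OF fsupp_linear_lin assms] .

lemma lin_swap: "lin (\<lambda>x. lin (\<lambda>y. F x y) w) v = lin (\<lambda>y. lin (\<lambda>x. F x y) v) w"
proof (rule ext)
  fix z
  have "lin (\<lambda>x. lin (\<lambda>y. F x y) w) v z = (\<Sum>x\<in>supp v. \<Sum>y\<in>supp w. v x * (w y * F x y z))"
    unfolding lin_def by (simp add: sum_distrib_left)
  also have "\<dots> = (\<Sum>y\<in>supp w. \<Sum>x\<in>supp v. v x * (w y * F x y z))" by (rule sum.swap)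
  also have "\<dots> = lin (\<lambda>y. lin (\<lambda>x. F x y) v) w z"
    unfolding lin_def by (simp add: sum_distrib_left algebra_simps)
  finally show "lin (\<lambda>x. lin (\<lambda>y. F x y) w) v z = lin (\<lambda>y. lin (\<lambda>x. F x y) v) w z" .
qed

lemma lin_cong: "(\<And>x. x \<in> supp v \<Longrightarrow> T x = T' x) \<Longrightarrow> lin T v = lin T' v"
  unfolding lin_def by (auto intro!: ext sum.cong)

lemma lin_scal: "fsupp v \<Longrightarrow> lin F (scal c v) = scal c (lin F v)"
  using fsupp_linear_lin[of F] unfolding fsupp_linear_def scal_def by blast

lemma lin_scal_const: "lin (\<lambda>x. scal (f x) X) v = scal (linf f v) X"
  by (auto simp: lin_def linf_def scal_def sum_distrib_right mult.assoc intro!: ext)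

lemma lin_scal_basis: "fsupp v \<Longrightarrow> lin (\<lambda>b. scal c (basis b)) v = scal c v"
  using fsupp_linear_lin_commute[OF fsupp_linear_scal, of v basis c] by (simp add: lin_basis_self)

lemma fsupp_linear_scal_linf [intro]: "fsupp_linear (\<lambda>w. scal (linf f w) X)"
proof -
  have "linf f (\<lambda>p. v p + w p) = linf f v + linf f w" if "fsupp v" "fsupp w" for v w
    using fsupp_linear_lin[of "\<lambda>x (_::unit). f x"] that unfolding fsupp_linear_def linf_eq_lin by metis
  moreover have "linf f (\<lambda>p. c * v p) = c * linf f v" if "fsupp v" for c v
    using fsupp_linear_lin[of "\<lambda>x (_::unit). f x"] that unfolding fsupp_linear_def linf_eq_lin by metis
  ultimately show ?thesis unfolding fsupp_linear_def scal_def by (simp add: algebra_simps)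
qed

lemma bil_eq_lin_left: "bil B v w = lin (\<lambda>x. lin (B x) w) v"
  by (auto simp: bil_def lin_def sum_distrib_left mult.assoc intro!: ext)

lemma bil_eq_lin_right: "bil B v w = lin (\<lambda>y. lin (\<lambda>x. B x y) v) w"
  unfolding bil_eq_lin_left by (rule lin_swap)

lemma fsupp_linear_bil_left [intro]: "fsupp_linear (\<lambda>v. bil B v w)"
  unfolding bil_eq_lin_left by (rule fsupp_linear_lin)

lemma fsupp_linear_bil_right [intro]: "fsupp_linear (\<lambda>w. bil B v w)"
  unfolding bil_eq_lin_right by (rule fsupp_linear_lin)

lemma bil_basis_left: "bil B (basis x) w = lin (B x) w"
  by (simp add: bil_eq_lin_left)

lemma bil_basis_right: "bil B v (basis y) = lin (\<lambda>x. B x y) v"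
  by (simp add: bil_eq_lin_right)

lemma bil_basis [simp]: "bil B (basis x) (basis y) = B x y"
  by (simp add: bil_eq_lin_left)

lemma fsupp_bil [intro]: "fsupp v \<Longrightarrow> fsupp w \<Longrightarrow> (\<And>x y. fsupp (B x y)) \<Longrightarrow> fsupp (bil B v w)"
  unfolding bil_eq_lin_left by (intro fsupp_lin) auto

lemma bil_lincomb_left:
  "finite A \<Longrightarrow> \<forall>i\<in>A. fsupp (V i) \<Longrightarrow> bil B (lincomb A c V) w = lincomb A c (\<lambda>i. bil B (V i) w)"
  using fsupp_linear_lincomb[OF fsupp_linear_bil_left] by blast

lemma bil_lincomb_right:
  "finite A \<Longrightarrow> \<forall>i\<in>A. fsupp (V i) \<Longrightarrow> bil B v (lincomb A c V) = lincomb A c (\<lambda>i. bil B v (V i))"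
  using fsupp_linear_lincomb[OF fsupp_linear_bil_right] by blast

lemma bil_scal_left: "fsupp v \<Longrightarrow> bil B (scal c v) w = scal c (bil B v w)"
  using fsupp_linear_bil_left[of B w] unfolding fsupp_linear_def scal_def by blast

lemma bil_scal_right: "fsupp w \<Longrightarrow> bil B v (scal c w) = scal c (bil B v w)"
  using fsupp_linear_bil_right[of B v] unfolding fsupp_linear_def scal_def by blast

definition central :: "('x \<Rightarrow> 'x \<Rightarrow> 'x vec) \<Rightarrow> 'x vec \<Rightarrow> bool" where
  "central B a \<longleftrightarrow> (\<forall>X. fsupp X \<longrightarrow> bil B a X = bil B X a)"

lemma central_lincomb:
  fixes B :: "'x \<Rightarrow> 'x \<Rightarrow> 'x vec"
  assumes "finite A" "\<And>i. i \<in> A \<Longrightarrow> fsupp (V i)" "\<And>i. i \<in> A \<Longrightarrow> central B (V i)"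
  shows "central B (lincomb A c V)"
  unfolding central_def
proof (intro allI impI)
  fix X :: "'x vec" assume X: "fsupp X"
  have "bil B (lincomb A c V) X = lincomb A c (\<lambda>i. bil B (V i) X)"
    using assms by (simp add: bil_lincomb_left)
  also have "\<dots> = lincomb A c (\<lambda>i. bil B X (V i))"
    using assms X by (auto simp: central_def lincomb_def intro!: ext sum.cong)
  also have "\<dots> = bil B X (lincomb A c V)" using assms by (simp add: bil_lincomb_right)
  finally show "bil B (lincomb A c V) X = bil B X (lincomb A c V)" .
qed

lemma lincomb_cong:
  "(\<And>i. i \<in> A \<Longrightarrow> c i = c' i) \<Longrightarrow> (\<And>i. i \<in> A \<Longrightarrow> V i = V' i) \<Longrightarrow> lincomb A c V = lincomb A c' V'"
  unfolding lincomb_def by (auto intro!: ext sum.cong)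

lemma lincomb_swap: "lincomb A c (\<lambda>i. lincomb B (d i) V) = lincomb B (\<lambda>b. \<Sum>i\<in>A. c i * d i b) V"
proof (rule ext)
  fix p
  have "lincomb A c (\<lambda>i. lincomb B (d i) V) p = (\<Sum>i\<in>A. \<Sum>b\<in>B. c i * d i b * V b p)"
    unfolding lincomb_def by (simp add: sum_distrib_left mult.assoc)
  also have "\<dots> = (\<Sum>b\<in>B. \<Sum>i\<in>A. c i * d i b * V b p)" by (rule sum.swap)
  also have "\<dots> = lincomb B (\<lambda>b. \<Sum>i\<in>A. c i * d i b) V p"
    unfolding lincomb_def by (simp add: sum_distrib_right)
  finally show "lincomb A c (\<lambda>i. lincomb B (d i) V) p = lincomb B (\<lambda>b. \<Sum>i\<in>A. c i * d i b) V p" .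
qed

lemma lincomb_scal_const: "lincomb A c (\<lambda>i. scal (f i) X) = scal (\<Sum>i\<in>A. c i * f i) X"
  unfolding lincomb_def scal_def by (auto simp: sum_distrib_right mult.assoc intro!: ext)

lemma lincomb_reindex: "bij_betw h A B \<Longrightarrow> lincomb A (\<lambda>i. c (h i)) (\<lambda>i. V (h i)) = lincomb B c V"
  unfolding lincomb_def by (auto intro!: ext sum.reindex_bij_betw)

lemma lincomb_reindex_inverse:
  assumes "\<And>a. a \<in> A \<Longrightarrow> i (h a) = a" "\<And>a. a \<in> A \<Longrightarrow> h a \<in> B"
    "\<And>b. b \<in> B \<Longrightarrow> h (i b) = b" "\<And>b. b \<in> B \<Longrightarrow> i b \<in> A"
  shows "lincomb A (\<lambda>a. c (h a)) (\<lambda>a. V (h a)) = lincomb B c V"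
  by (rule lincomb_reindex, rule bij_betw_byWitness[of A i]) (use assms in auto)

lemma lincomb_Times_nested: "lincomb (A \<times> B) c V = lincomb A (\<lambda>_. 1) (\<lambda>a. lincomb B (\<lambda>b. c (a, b)) (\<lambda>b. V (a, b)))"
  unfolding lincomb_def by (auto intro!: ext simp: sum.cartesian_product)

lemma lincomb_nested_Times:
  "lincomb A c (\<lambda>a. lincomb B d (V a)) = lincomb (A \<times> B) (\<lambda>k. c (fst k) * d (snd k)) (\<lambda>k. V (fst k) (snd k))"
  unfolding lincomb_def
  by (auto intro!: ext simp: sum.cartesian_product sum_distrib_left mult.assoc case_prod_beta)

lemma lincomb_delta: "finite A \<Longrightarrow> b \<in> A \<Longrightarrow> lincomb A (\<lambda>a. if a = b then c a else 0) V = scal (c b) (V b)"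
proof -
  assume "finite A" "b \<in> A"
  moreover have "(\<Sum>a\<in>A. (if a = b then c a else 0) * V a p) = (\<Sum>a\<in>A. if a = b then c a * V a p else 0)" for p
    by (rule sum.cong) auto
  ultimately show ?thesis unfolding lincomb_def scal_def by (auto intro!: ext)
qed

lemma sum_Times: "(\<Sum>k\<in>A \<times> B. f k) = (\<Sum>a\<in>A. \<Sum>b\<in>B. f (a, b))"
  by (simp add: sum.cartesian_product split_beta)

lemma lincomb_collapse_fst:
  assumes "finite A" "finite B" "a0 \<in> A"
  shows "lincomb (A \<times> B) (\<lambda>k. if fst k = a0 then c k else 0) V = lincomb B (\<lambda>b. c (a0, b)) (\<lambda>b. V (a0, b))"
proof (rule ext)
  fix p
  have "lincomb (A \<times> B) (\<lambda>k. if fst k = a0 then c k else 0) V p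
      = (\<Sum>a\<in>A. if a = a0 then (\<Sum>b\<in>B. c (a, b) * V (a, b) p) else 0)"
    unfolding lincomb_def sum_Times by (intro sum.cong refl) auto
  then show "lincomb (A \<times> B) (\<lambda>k. if fst k = a0 then c k else 0) V p = lincomb B (\<lambda>b. c (a0, b)) (\<lambda>b. V (a0, b)) p"
    using assms unfolding lincomb_def by simp
qed

lemma lincomb_collapse_snd:
  assumes "finite A" "finite B" "b0 \<in> B"
  shows "lincomb (A \<times> B) (\<lambda>k. if snd k = b0 then c k else 0) V = lincomb A (\<lambda>a. c (a, b0)) (\<lambda>a. V (a, b0))"
proof (rule ext)
  fix p
  have "lincomb (A \<times> B) (\<lambda>k. if snd k = b0 then c k else 0) V p
      = (\<Sum>a\<in>A. \<Sum>b\<in>B. if b = b0 then c (a, b) * V (a, b) p else 0)"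
    unfolding lincomb_def sum_Times by (intro sum.cong refl) auto
  then show "lincomb (A \<times> B) (\<lambda>k. if snd k = b0 then c k else 0) V p = lincomb A (\<lambda>a. c (a, b0)) (\<lambda>a. V (a, b0)) p"
    using assms unfolding lincomb_def by simp
qed

lemma lincomb_collapse_mid:
  assumes "finite A" "finite B" "finite C" "b0 \<in> B"
  shows "lincomb (A \<times> B \<times> C) (\<lambda>k. if fst (snd k) = b0 then c k else 0) V
       = lincomb (A \<times> C) (\<lambda>k. c (fst k, b0, snd k)) (\<lambda>k. V (fst k, b0, snd k))"
proof (rule ext)
  fix p
  have "lincomb (A \<times> B \<times> C) (\<lambda>k. if fst (snd k) = b0 then c k else 0) V p
      = (\<Sum>a\<in>A. \<Sum>b\<in>B. if b = b0 then (\<Sum>x\<in>C. c (a, b, x) * V (a, b, x) p) else 0)"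
    unfolding lincomb_def sum_Times by (intro sum.cong refl) auto
  also have "\<dots> = lincomb (A \<times> C) (\<lambda>k. c (fst k, b0, snd k)) (\<lambda>k. V (fst k, b0, snd k)) p"
    using assms unfolding lincomb_def by (simp add: sum.cartesian_product split_beta)
  finally show "lincomb (A \<times> B \<times> C) (\<lambda>k. if fst (snd k) = b0 then c k else 0) V p
      = lincomb (A \<times> C) (\<lambda>k. c (fst k, b0, snd k)) (\<lambda>k. V (fst k, b0, snd k)) p" .
qed

lemma lincomb_collapse_graph:
  assumes "finite A" "finite B" "finite C" "\<And>a. a \<in> A \<Longrightarrow> f a \<in> B" "\<And>a. a \<in> A \<Longrightarrow> g a \<in> C"
  shows "lincomb (A \<times> B \<times> C) (\<lambda>k. if fst (snd k) = f (fst k) \<and> snd (snd k) = g (fst k) then c k else 0) V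
       = lincomb A (\<lambda>a. c (a, f a, g a)) (\<lambda>a. V (a, f a, g a))"
proof (rule ext)
  fix p
  define H where "H a b x = c (a, b, x) * V (a, b, x) p" for a b x
  have "lincomb (A \<times> B \<times> C) (\<lambda>k. if fst (snd k) = f (fst k) \<and> snd (snd k) = g (fst k) then c k else 0) V p
      = (\<Sum>a\<in>A. \<Sum>b\<in>B. \<Sum>x\<in>C. if b = f a \<and> x = g a then H a b x else 0)"
    unfolding lincomb_def H_def sum_Times by (intro sum.cong refl) auto
  also have "\<dots> = (\<Sum>a\<in>A. \<Sum>b\<in>B. if b = f a then (\<Sum>x\<in>C. if x = g a then H a b x else 0) else 0)"
    by (intro sum.cong refl) auto
  also have "\<dots> = (\<Sum>a\<in>A. H a (f a) (g a))"
    using assms by (intro sum.cong refl) simp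
  finally show "lincomb (A \<times> B \<times> C) (\<lambda>k. if fst (snd k) = f (fst k) \<and> snd (snd k) = g (fst k) then c k else 0) V p
       = lincomb A (\<lambda>a. c (a, f a, g a)) (\<lambda>a. V (a, f a, g a)) p" unfolding lincomb_def H_def .
qed

lemma bil_lincomb_orthogonal:
  assumes fin: "finite A" and fV: "\<And>i. i \<in> A \<Longrightarrow> fsupp (V i)"
    and orth: "\<And>k k'. k \<in> A \<Longrightarrow> k' \<in> A \<Longrightarrow> bil B (V k) (V k') = (if k = k' then V k else (\<lambda>p. 0))"
  shows "bil B (lincomb A c V) (lincomb A d V) = lincomb A (\<lambda>k. c k * d k) V"
proof -
  have "bil B (lincomb A c V) (lincomb A d V) = lincomb A c (\<lambda>k. lincomb A d (\<lambda>k'. bil B (V k) (V k')))"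
    using fin fV by (simp add: bil_lincomb_left) (auto intro!: lincomb_cong simp: bil_lincomb_right)
  also have "\<dots> = lincomb A c (\<lambda>k. lincomb A (\<lambda>k'. if k' = k then d k' else 0) V)"
    using orth by (auto intro!: lincomb_cong ext sum.cong simp: lincomb_def)
  also have "\<dots> = lincomb A c (\<lambda>k. scal (d k) (V k))"
    using fin by (auto intro!: lincomb_cong simp: lincomb_delta)
  also have "\<dots> = lincomb A (\<lambda>k. c k * d k) V"
    unfolding lincomb_def scal_def by (auto intro!: ext sum.cong simp: mult.assoc)
  finally show ?thesis .
qed

definition uncurry3 :: "('a \<Rightarrow> 'b \<Rightarrow> 'c \<Rightarrow> 'd) \<Rightarrow> 'a \<times> 'b \<times> 'c \<Rightarrow> 'd" where
  "uncurry3 f k = f (fst k) (fst (snd k)) (snd (snd k))"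

lemma tens_basis [simp]: "tens (basis a) (basis b) = basis (a, b)"
  by (auto simp: tens_def basis_def intro!: ext)

lemma tens_zero_left [simp]: "tens (\<lambda>p. 0) w = (\<lambda>p. 0)"
  by (auto simp: tens_def)

lemma tens_zero_right [simp]: "tens v (\<lambda>p. 0) = (\<lambda>p. 0)"
  by (auto simp: tens_def)

lemma supp_tens: "supp (tens v w) = supp v \<times> supp w"
  by (auto simp: tens_def supp_def)

lemma fsupp_tens [intro, simp]: "fsupp v \<Longrightarrow> fsupp w \<Longrightarrow> fsupp (tens v w)"
  by (simp add: fsupp_def supp_tens)

lemma lin_tens:
  assumes "fsupp v" "fsupp w"
  shows "lin T (tens v w) = lin (\<lambda>a. lin (\<lambda>b. T (a, b)) w) v"
proof (rule ext)
  fix y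
  have "lin T (tens v w) y = (\<Sum>(a,b)\<in>supp v \<times> supp w. v a * w b * T (a, b) y)"
    unfolding lin_def supp_tens by (simp add: tens_def case_prod_beta)
  also have "\<dots> = lin (\<lambda>a. lin (\<lambda>b. T (a, b)) w) v y"
    unfolding lin_def by (simp add: sum.cartesian_product sum_distrib_left mult.assoc)
  finally show "lin T (tens v w) y = lin (\<lambda>a. lin (\<lambda>b. T (a, b)) w) v y" .
qed

lemma lin_tens_left: "lin (\<lambda>y. tens X (W y)) d = tens X (lin W d)"
  unfolding lin_def tens_def
  by (rule ext, clarsimp simp: sum_distrib_left, rule sum.cong, simp_all add: algebra_simps)

lemma lin_tens_right: "lin (\<lambda>y. tens (W y) X) d = tens (lin W d) X"
  unfolding lin_def tens_def
  by (rule ext, clarsimp simp: sum_distrib_right, rule sum.cong, simp_all add: algebra_simps)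

lemma fsupp_linear_tens_left [intro]: "fsupp_linear (\<lambda>v. tens v z)"
  by (auto simp: fsupp_linear_def tens_def algebra_simps)

lemma fsupp_linear_tens_right [intro]: "fsupp_linear (\<lambda>z. tens v z)"
  by (auto simp: fsupp_linear_def tens_def algebra_simps)

lemma tens_lincomb_right: "tens v (lincomb A c V) = lincomb A c (\<lambda>i. tens v (V i))"
  by (auto simp: tens_def lincomb_def sum_distrib_left algebra_simps intro!: ext)

lemma tens_lincomb:
  "tens (lincomb A c V) (lincomb B d W)
     = lincomb (A \<times> B) (\<lambda>k. c (fst k) * d (snd k)) (\<lambda>k. tens (V (fst k)) (W (snd k)))"
proof (rule ext)
  fix pq :: "'a \<times> 'b"
  obtain p q where pq: "pq = (p, q)" by (cases pq) auto
  have "tens (lincomb A c V) (lincomb B d W) (p, q) = (\<Sum>a\<in>A. \<Sum>b\<in>B. c a * d b * (V a p * W b q))"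
    unfolding tens_def lincomb_def by (simp add: sum_product algebra_simps)
  then show "tens (lincomb A c V) (lincomb B d W) pq
      = lincomb (A \<times> B) (\<lambda>k. c (fst k) * d (snd k)) (\<lambda>k. tens (V (fst k)) (W (snd k))) pq"
    unfolding pq lincomb_def tens_def by (simp add: sum.cartesian_product case_prod_beta)
qed

lemma bil_tmult:
  assumes "fsupp a" "fsupp b" "fsupp c" "fsupp d"
  shows "bil (tmult M N) (tens a b) (tens c d) = tens (bil M a c) (bil N b d)"
proof -
  have "lin (tmult M N (x1, x2)) (tens c d) = tens (lin (M x1) c) (lin (N x2) d)" for x1 x2
    using assms(3,4) by (simp add: lin_tens tmult_def lin_tens_left lin_tens_right)
  then show ?thesis
    unfolding bil_eq_lin_left using assms(1,2) by (simp add: lin_tens lin_tens_left lin_tens_right)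
qed

lemma lin_trilinear:
  assumes fv: "fsupp v" and fw: "fsupp w" and fz: "fsupp z"
    and L1: "fsupp_linear (\<lambda>v. F v w z)"
    and L2: "\<And>a. fsupp_linear (\<lambda>w. F (basis a) w z)"
    and L3: "\<And>a b. fsupp_linear (\<lambda>z. F (basis a) (basis b) z)"
  shows "lin (\<lambda>(a, b, c). F (basis a) (basis b) (basis c)) (tens v (tens w z)) = F v w z"
proof -
  have "lin (\<lambda>(a, b, c). F (basis a) (basis b) (basis c)) (tens v (tens w z))
      = lin (\<lambda>a. lin (\<lambda>b. lin (\<lambda>c. F (basis a) (basis b) (basis c)) z) w) v"
    using fv fw fz by (simp add: lin_tens)
  also have "\<dots> = lin (\<lambda>a. lin (\<lambda>b. F (basis a) (basis b) z) w) v"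
    using fsupp_linear_eq_lin[OF L3 fz] by simp
  also have "\<dots> = lin (\<lambda>a. F (basis a) w z) v"
    using fsupp_linear_eq_lin[OF L2 fw] by simp
  also have "\<dots> = F v w z"
    using fsupp_linear_eq_lin[OF L1 fv] by simp
  finally show ?thesis .
qed

definition tens2r :: "('a \<times> 'b) vec \<Rightarrow> 'c vec \<Rightarrow> ('a \<times> 'b \<times> 'c) vec" where
  "tens2r X Y = (\<lambda>(p, q, r). X (p, q) * Y r)"

definition tens3r :: "('a \<times> 'b \<times> 'c) vec \<Rightarrow> 'd vec \<Rightarrow> ('a \<times> 'b \<times> 'c \<times> 'd) vec" where
  "tens3r X Y = (\<lambda>(p, q, r, s). X (p, q, r) * Y s)"

lemma tens2r_tens: "tens2r (tens a b) Y = tens a (tens b Y)"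
  by (auto simp: tens2r_def tens_def intro!: ext)

lemma tens3r_tens: "tens3r (tens a (tens b c)) Y = tens a (tens b (tens c Y))"
  by (auto simp: tens3r_def tens_def intro!: ext)

lemma tens2r_lincomb_left: "tens2r (lincomb A c V) Y = lincomb A c (\<lambda>i. tens2r (V i) Y)"
  by (auto simp: tens2r_def lincomb_def sum_distrib_right mult.assoc intro!: ext)

lemma tens2r_lincomb_right: "tens2r X (lincomb A c V) = lincomb A c (\<lambda>i. tens2r X (V i))"
  by (auto simp: tens2r_def lincomb_def sum_distrib_left algebra_simps intro!: ext)

lemma tens3r_lincomb:
  "tens3r (lincomb A c V) (lincomb B d W)
     = lincomb (A \<times> B) (\<lambda>k. c (fst k) * d (snd k)) (\<lambda>k. tens3r (V (fst k)) (W (snd k)))"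
proof (rule ext)
  fix t :: "'a \<times> 'b \<times> 'c \<times> 'd"
  obtain p q r s where t: "t = (p, q, r, s)" by (cases t) auto
  have "tens3r (lincomb A c V) (lincomb B d W) (p, q, r, s) = (\<Sum>a\<in>A. \<Sum>b\<in>B. c a * d b * (V a (p, q, r) * W b s))"
    unfolding tens3r_def lincomb_def by (simp add: sum_product, intro sum.cong refl, simp add: algebra_simps)
  then show "tens3r (lincomb A c V) (lincomb B d W) t
      = lincomb (A \<times> B) (\<lambda>k. c (fst k) * d (snd k)) (\<lambda>k. tens3r (V (fst k)) (W (snd k))) t"
    unfolding t lincomb_def tens3r_def by (simp add: sum.cartesian_product case_prod_beta)
qed

lemma lin_tens2r_left: "lin (\<lambda>i. tens2r X (W i)) w = tens2r X (lin W w)"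
  unfolding lin_def tens2r_def
  by (rule ext, clarsimp simp: sum_distrib_left, rule sum.cong, simp_all add: algebra_simps)

lemma lin_tens2r_right: "lin (\<lambda>i. tens2r (W i) Y) w = tens2r (lin W w) Y"
  unfolding lin_def tens2r_def
  by (rule ext, clarsimp simp: sum_distrib_right, rule sum.cong, simp_all add: algebra_simps)

lemma fsupp_tens2r [intro, simp]: "fsupp X \<Longrightarrow> fsupp Y \<Longrightarrow> fsupp (tens2r X Y)"
proof -
  assume "fsupp X" "fsupp Y"
  moreover have "supp (tens2r X Y) \<subseteq> (\<lambda>(pq, r). (fst pq, snd pq, r)) ` (supp X \<times> supp Y)"
    by (auto simp: supp_def tens2r_def image_def)
  ultimately show ?thesis unfolding fsupp_def by (meson finite_SigmaI finite_imageI finite_subset)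
qed

lemma central_tens:
  assumes "central M a" "central N b" "fsupp a" "fsupp b"
  shows "central (tmult M N) (tens a b)"
  unfolding central_def
proof (intro allI impI)
  fix X :: "('a \<times> 'b) vec" assume X: "fsupp X"
  show "bil (tmult M N) (tens a b) X = bil (tmult M N) X (tens a b)"
  proof (rule fsupp_linear_eqI[OF fsupp_linear_bil_right fsupp_linear_bil_left _ X])
    fix x :: "'a \<times> 'b"
    have "basis x = tens (basis (fst x)) (basis (snd x))" by simp
    then show "bil (tmult M N) (tens a b) (basis x) = bil (tmult M N) (basis x) (tens a b)"
      using assms by (simp add: bil_tmult central_def del: tens_basis)
  qed
qed

lemma algebra_fsupp_bil [intro]: "is_algebra M u \<Longrightarrow> fsupp a \<Longrightarrow> fsupp b \<Longrightarrow> fsupp (bil M a b)"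
  by (rule fsupp_bil) (auto simp: is_algebra_def)

lemma algebra_assoc:
  assumes A: "is_algebra M u" and fa: "fsupp a" and fb: "fsupp b" and fc: "fsupp c"
  shows "bil M (bil M a b) c = bil M a (bil M b c)"
proof -
  have fM: "\<And>x y. fsupp (M x y)" using A by (simp add: is_algebra_def)
  have basis_assoc: "\<And>x y z. bil M (M x y) (basis z) = bil M (basis x) (M y z)"
    using A by (simp add: is_algebra_def)
  have on_basis: "bil M (M x y) c = lin (M x) (lin (M y) c)" for x y
  proof -
    have "bil M (M x y) c = lin (\<lambda>z. bil M (M x y) (basis z)) c"
      by (rule fsupp_linear_eq_lin[OF fsupp_linear_bil_right fc])
    also have "\<dots> = lin (M x) (lin (M y) c)"
      using fc fM by (simp add: basis_assoc bil_basis_left lin_lin)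
    finally show ?thesis .
  qed
  have on_basis_left: "bil M (bil M (basis x) b) c = bil M (basis x) (bil M b c)" for x
  proof (rule fsupp_linear_eqI[where v=b, OF _ _ _ fb])
    show "fsupp_linear (\<lambda>b. bil M (bil M (basis x) b) c)"
      by (rule fsupp_linear_comp[OF fsupp_linear_bil_left fsupp_linear_bil_right]) (use fM in auto)
    show "fsupp_linear (\<lambda>b. bil M (basis x) (bil M b c))"
      by (rule fsupp_linear_comp[OF fsupp_linear_bil_right fsupp_linear_bil_left]) (use fM fc in auto)
  qed (simp add: bil_basis_left on_basis)
  show ?thesis
  proof (rule fsupp_linear_eqI[where v=a, OF _ fsupp_linear_bil_left _ fa])
    show "fsupp_linear (\<lambda>a. bil M (bil M a b) c)"
      by (rule fsupp_linear_comp[OF fsupp_linear_bil_left fsupp_linear_bil_left]) (use fM fb in auto)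
  qed (rule on_basis_left)
qed

lemma algebra_unit_left:
  assumes "is_algebra M u" "fsupp a"
  shows "bil M u a = a"
  using fsupp_linear_eq_lin[OF fsupp_linear_bil_right assms(2), of M u] assms
  by (simp add: is_algebra_def lin_basis_self)

lemma algebra_unit_right:
  assumes "is_algebra M u" "fsupp a"
  shows "bil M a u = a"
  using fsupp_linear_eq_lin[OF fsupp_linear_bil_left assms(2), of M u] assms
  by (simp add: is_algebra_def lin_basis_self)

lemma tmult_is_algebra:
  assumes A: "is_algebra M u" and B: "is_algebra N u'"
  shows "is_algebra (tmult M N) (tens u u')"
proof -
  have fM: "\<And>x y. fsupp (M x y)" and fN: "\<And>x y. fsupp (N x y)" and fu: "fsupp u" "fsupp u'"
    using A B by (auto simp: is_algebra_def)
  have bt: "basis x = tens (basis (fst x)) (basis (snd x))" for x :: "'a \<times> 'b"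
    by simp
  have t: "tmult M N x y = tens (M (fst x) (fst y)) (N (snd x) (snd y))" for x y
    by (simp add: tmult_def case_prod_beta)
  show ?thesis
    unfolding is_algebra_def
  proof (intro conjI allI)
    show "fsupp (tmult M N x y)" for x y unfolding t using fM fN by auto
    show "fsupp (tens u u')" using fu by auto
    show "bil (tmult M N) (tmult M N x y) (basis z) = bil (tmult M N) (basis x) (tmult M N y z)" for x y z
      apply (subst (1 2) bt)
      apply (simp only: t[of x y] t[of y z])
      using A B fM fN by (simp add: bil_tmult is_algebra_def bil_basis_left bil_basis_right del: tens_basis)
    show "bil (tmult M N) (tens u u') (basis x) = basis x" for x
      using A B fu by (subst (1 2) bt) (simp add: bil_tmult is_algebra_def del: tens_basis)
    show "bil (tmult M N) (basis x) (tens u u') = basis x" for x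
      using A B fu by (subst (1 2) bt) (simp add: bil_tmult is_algebra_def del: tens_basis)
  qed
qed

lemma id_D_tens: "id_D D (a, b) = tens (basis a) (D b)"
  by (auto simp: id_D_def tens_def basis_def intro!: ext)

lemma D_id_tens2r: "D_id D (a, b) = tens2r (D a) (basis b)"
  by (auto simp: D_id_def tens2r_def basis_def intro!: ext)

lemma idDid_tens: "idDid D (a, b, c) = tens (basis a) (tens2r (D b) (basis c))"
  by (auto simp: idDid_def tens2r_def tens_def basis_def intro!: ext)

lemma iidD_tens: "iidD D (a, b, c) = tens (basis a) (tens (basis b) (D c))"
  by (auto simp: iidD_def tens_def basis_def intro!: ext)

lemma Diid_tens2r: "Diid D (a, b, c) = tens2r (D a) (tens (basis b) (basis c))"
  by (auto simp: Diid_def tens2r_def tens_def basis_def intro!: ext)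

lemma lin_id_D_tens: "fsupp v \<Longrightarrow> fsupp w \<Longrightarrow> lin (id_D D) (tens v w) = tens v (lin D w)"
  by (simp add: lin_tens id_D_tens lin_tens_left lin_tens_right lin_basis_self)

lemma lin_D_id_tens: "fsupp v \<Longrightarrow> fsupp w \<Longrightarrow> lin (D_id D) (tens v w) = tens2r (lin D v) w"
  by (simp add: lin_tens D_id_tens2r lin_tens2r_left lin_tens2r_right lin_basis_self)

lemma lin_idDid_tens: "fsupp v \<Longrightarrow> fsupp w \<Longrightarrow> fsupp z \<Longrightarrow>
    lin (idDid D) (tens v (tens w z)) = tens v (tens2r (lin D w) z)"
  by (simp add: lin_tens idDid_tens lin_tens_left lin_tens_right lin_tens2r_left lin_tens2r_right lin_basis_self)

lemma lin_iidD_tens: "fsupp v \<Longrightarrow> fsupp w \<Longrightarrow> fsupp z \<Longrightarrow>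
    lin (iidD D) (tens v (tens w z)) = tens v (tens w (lin D z))"
  by (simp add: lin_tens iidD_tens lin_tens_left lin_tens_right lin_basis_self)

lemma lin_lin_basis_pair: "fsupp w \<Longrightarrow> fsupp z \<Longrightarrow> lin (\<lambda>a. lin (\<lambda>b. basis (a, b)) z) w = tens w z"
  using lin_tens[of w z basis] by (simp add: lin_basis_self)

lemma lin_Diid_tens: "fsupp v \<Longrightarrow> fsupp w \<Longrightarrow> fsupp z \<Longrightarrow>
    lin (Diid D) (tens v (tens w z)) = tens2r (lin D v) (tens w z)"
  by (simp add: lin_tens Diid_tens2r lin_tens_left lin_tens_right lin_tens2r_left lin_tens2r_right lin_basis_self lin_lin_basis_pair)

lemma gauge_equiv_by_identity:
  assumes F: "gauge_transf M u e F Finv" and fM: "\<And>x y. fsupp (M x y)" and fu: "fsupp u"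
    and fDA: "\<And>h. fsupp (DA h)" and f\<phi>A: "fsupp \<phi>A"
    and DA: "\<And>h. DA h = twist_D M D F Finv h" and \<phi>A: "\<phi>A = twist_phi M u D \<phi> F Finv"
  shows "gauge_equiv M u DA e \<phi>A D e \<phi>"
  unfolding gauge_equiv_def
proof (intro exI conjI allI)
  have maptens2: "maptens basis basis = basis"
    by (auto simp: maptens_def intro!: ext)
  have maptens3: "maptens basis (maptens basis basis) = basis"
    by (auto simp: maptens_def intro!: ext)
  show "gauge_transf M u e F Finv" by (rule F)
  show "lin_bij basis"
    unfolding lin_bij_def bij_betw_def inj_on_def image_def by (auto simp: lin_basis_self)
  show "lin basis (M x y) = bil M (basis x) (basis y)" for x y by (simp add: fM lin_basis_self)
  show "lin basis u = u" by (simp add: fu lin_basis_self)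
  show "lin (maptens basis basis) (DA h) = lin (twist_D M D F Finv) (basis h)" for h
    by (simp add: maptens2 lin_basis_self fDA DA[symmetric])
  show "linf e (basis h) = e h" for h by simp
  show "lin (maptens basis (maptens basis basis)) \<phi>A = twist_phi M u D \<phi> F Finv"
    by (simp add: maptens3 lin_basis_self f\<phi>A \<phi>A[symmetric])
qed

section \<open>Hopf algebras\<close>

locale hopf_algebra =
  fixes M :: "'b \<Rightarrow> 'b \<Rightarrow> 'b vec" and u :: "'b vec"
    and D :: "'b \<Rightarrow> ('b \<times> 'b) vec" and e :: "'b \<Rightarrow> complex" and S :: "'b \<Rightarrow> 'b vec"
  assumes H: "is_hopf M u D e S"
begin

lemma algebra_M: "is_algebra M u" using H by (simp add: is_hopf_def is_qb_base_def)

lemma fsupp_M [simp, intro]: "fsupp (M x y)" using algebra_M by (simp add: is_algebra_def)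

lemma fsupp_unit [simp, intro]: "fsupp u" using algebra_M by (simp add: is_algebra_def)

lemma fsupp_D [simp, intro]: "fsupp (D x)" using H by (simp add: is_hopf_def is_qb_base_def)

lemma fsupp_S [simp, intro]: "fsupp (S x)" using H by (simp add: is_hopf_def)

lemma D_mult: "lin D (M x y) = bil (M2 M) (D x) (D y)" using H by (simp add: is_hopf_def is_qb_base_def)

lemma D_unit: "lin D u = tens u u" using H by (simp add: is_hopf_def is_qb_base_def)

lemma counit_mult: "linf e (M x y) = e x * e y" using H by (simp add: is_hopf_def is_qb_base_def)

lemma counit_unit: "linf e u = 1" using H by (simp add: is_hopf_def is_qb_base_def)

lemma counit_left: "lin (\<lambda>(a, b). scal (e a) (basis b)) (D x) = basis x"
  using H by (simp add: is_hopf_def is_qb_base_def)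

lemma counit_right: "lin (\<lambda>(a, b). scal (e b) (basis a)) (D x) = basis x"
  using H by (simp add: is_hopf_def is_qb_base_def)

lemma coassoc: "lin (D_id D) (D x) = lin (id_D D) (D x)"
  using H by (simp add: is_hopf_def)

lemma antipode_left: "lin (\<lambda>(a, b). bil M (S a) (basis b)) (D x) = scal (e x) u"
  using H by (simp add: is_hopf_def)

lemma antipode_right: "lin (\<lambda>(a, b). bil M (basis a) (S b)) (D x) = scal (e x) u"
  using H by (simp add: is_hopf_def)

abbreviation mul where "mul v w \<equiv> bil M v w"

lemma fsupp_mul [simp, intro]: "fsupp v \<Longrightarrow> fsupp w \<Longrightarrow> fsupp (mul v w)"
  using algebra_M by (rule algebra_fsupp_bil)

lemma mul_assoc: "fsupp a \<Longrightarrow> fsupp b \<Longrightarrow> fsupp c \<Longrightarrow> mul (mul a b) c = mul a (mul b c)"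
  using algebra_M by (rule algebra_assoc)

lemma mul_unit_left [simp]: "fsupp a \<Longrightarrow> mul u a = a" using algebra_M by (rule algebra_unit_left)

lemma mul_unit_right [simp]: "fsupp a \<Longrightarrow> mul a u = a" using algebra_M by (rule algebra_unit_right)

lemma fsupp_lin_S [simp]: "fsupp v \<Longrightarrow> fsupp (lin S v)"
  by auto

text \<open>Sweedler notation: sweedler x Phi stands for sum Phi x_(1) x_(2).\<close>
definition sweedler :: "'b \<Rightarrow> ('b \<Rightarrow> 'b \<Rightarrow> 'c vec) \<Rightarrow> 'c vec" where
  "sweedler x \<Phi> = lin (\<lambda>z. \<Phi> (fst z) (snd z)) (D x)"

lemma fsupp_sweedler [intro]: "(\<And>p q. fsupp (\<Phi> p q)) \<Longrightarrow> fsupp (sweedler x \<Phi>)"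
  unfolding sweedler_def by auto

lemma fsupp_linear_sweedler:
  assumes "fsupp_linear L" "\<And>p q. fsupp (\<Phi> p q)"
  shows "L (sweedler x \<Phi>) = sweedler x (\<lambda>p q. L (\<Phi> p q))"
  unfolding sweedler_def using assms by (subst fsupp_linear_lin_commute) auto

lemma sweedler_cong:
  assumes "\<And>p q. \<Phi> p q = \<Psi> p q" shows "sweedler x \<Phi> = sweedler x \<Psi>"
proof -
  have "\<Phi> = \<Psi>" by (rule ext, rule ext, rule assms)
  then show ?thesis by simp
qed

lemma sweedler_swap: "sweedler x (\<lambda>p q. sweedler y (\<lambda>r s. \<Phi> p q r s)) = sweedler y (\<lambda>r s. sweedler x (\<lambda>p q. \<Phi> p q r s))"
  unfolding sweedler_def by (rule lin_swap)

lemma sweedler_counit_right: "sweedler x (\<lambda>p q. scal (e q) (F p)) = F x"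
proof -
  have "sweedler x (\<lambda>p q. scal (e q) (F p)) = lin (\<lambda>z. lin F (scal (e (snd z)) (basis (fst z)))) (D x)"
    unfolding sweedler_def by (simp add: lin_scal)
  also have "\<dots> = lin F (lin (\<lambda>z. scal (e (snd z)) (basis (fst z))) (D x))"
    by (rule lin_lin[symmetric]) auto
  also have "\<dots> = F x" using counit_right[of x] by (simp add: case_prod_unfold)
  finally show ?thesis .
qed

lemma sweedler_counit_left: "sweedler x (\<lambda>p q. scal (e p) (F q)) = F x"
proof -
  have "sweedler x (\<lambda>p q. scal (e p) (F q)) = lin (\<lambda>z. lin F (scal (e (fst z)) (basis (snd z)))) (D x)"
    unfolding sweedler_def by (simp add: lin_scal)
  also have "\<dots> = lin F (lin (\<lambda>z. scal (e (fst z)) (basis (snd z))) (D x))"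
    by (rule lin_lin[symmetric]) auto
  also have "\<dots> = F x" using counit_left[of x] by (simp add: case_prod_unfold)
  finally show ?thesis .
qed

lemma sweedler_antipode_right: "sweedler x (\<lambda>p q. mul (basis p) (S q)) = scal (e x) u"
  using antipode_right[of x] by (simp add: sweedler_def case_prod_unfold)

lemma D_id_eq_lin: "D_id D (p, q) = lin (\<lambda>z. basis (fst z, snd z, q)) (D p)"
proof -
  have "D_id D (p, q) = tens2r (lin basis (D p)) (basis q)"
    by (simp add: D_id_tens2r lin_basis_self)
  also have "\<dots> = lin (\<lambda>z. basis (fst z, snd z, q)) (D p)"
    unfolding lin_tens2r_right[symmetric] by (intro lin_cong ext) (auto simp: tens2r_def basis_def split: if_splits)
  finally show ?thesis .
qed

lemma id_D_eq_lin: "id_D D (p, q) = lin (\<lambda>z. basis (p, fst z, snd z)) (D q)"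
proof -
  have "id_D D (p, q) = tens (basis p) (lin basis (D q))"
    by (simp add: id_D_tens lin_basis_self)
  also have "\<dots> = lin (\<lambda>z. basis (p, fst z, snd z)) (D q)"
    by (simp add: lin_tens_left[symmetric])
  finally show ?thesis .
qed

lemma fsupp_D_id [intro]: "fsupp (D_id D t)"
  by (cases t) (auto simp: D_id_eq_lin)

lemma fsupp_id_D [intro]: "fsupp (id_D D t)"
  by (cases t) (auto simp: id_D_eq_lin)

lemma sweedler_coassoc:
  "sweedler x (\<lambda>p q. sweedler p (\<lambda>r s. \<Phi> r s q)) = sweedler x (\<lambda>p q. sweedler q (\<lambda>r s. \<Phi> p r s))"
proof -
  define \<Psi> where "\<Psi> = (\<lambda>t :: 'b \<times> 'b \<times> 'b. \<Phi> (fst t) (fst (snd t)) (snd (snd t)))"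
  have l: "lin \<Psi> (lin (D_id D) (D x)) = sweedler x (\<lambda>p q. sweedler p (\<lambda>r s. \<Phi> r s q))"
    unfolding sweedler_def
    by (subst lin_lin) (auto simp: D_id_eq_lin lin_lin \<Psi>_def intro!: lin_cong)
  have r: "lin \<Psi> (lin (id_D D) (D x)) = sweedler x (\<lambda>p q. sweedler q (\<lambda>r s. \<Phi> p r s))"
    unfolding sweedler_def
    by (subst lin_lin) (auto simp: id_D_eq_lin lin_lin \<Psi>_def intro!: lin_cong)
  show ?thesis using l r coassoc by simp
qed

text \<open>S is anti-multiplicative because, in the convolution algebra of maps H (x) H -> H,
both S o m and m^op o (S (x) S) are inverse to the multiplication m.\<close>
definition convolution :: "('b \<times> 'b \<Rightarrow> 'b vec) \<Rightarrow> ('b \<times> 'b \<Rightarrow> 'b vec) \<Rightarrow> 'b \<times> 'b \<Rightarrow> 'b vec" where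
  "convolution T U = (\<lambda>ab. sweedler (fst ab) (\<lambda>a1 a2. sweedler (snd ab) (\<lambda>b1 b2. mul (T (a1, b1)) (U (a2, b2)))))"

definition conv_unit :: "'b \<times> 'b \<Rightarrow> 'b vec" where
  "conv_unit = (\<lambda>ab. scal (e (fst ab) * e (snd ab)) u)"

lemma mul_sweedler_left: "(\<And>p q. fsupp (\<Phi> p q)) \<Longrightarrow> mul (sweedler x \<Phi>) X = sweedler x (\<lambda>p q. mul (\<Phi> p q) X)"
  by (rule fsupp_linear_sweedler[OF fsupp_linear_bil_left])

lemma mul_sweedler_right: "(\<And>p q. fsupp (\<Phi> p q)) \<Longrightarrow> mul X (sweedler x \<Phi>) = sweedler x (\<lambda>p q. mul X (\<Phi> p q))"
  by (rule fsupp_linear_sweedler[OF fsupp_linear_bil_right])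

lemma convolution_assoc:
  assumes fT: "\<And>z. fsupp (T z)" and fU: "\<And>z. fsupp (U z)" and fV: "\<And>z. fsupp (V z)"
  shows "convolution (convolution T U) V = convolution T (convolution U V)"
proof (rule ext)
  fix ab :: "'b \<times> 'b"
  obtain a b where ab: "ab = (a, b)" by (cases ab) auto
  define W where "W = (\<lambda>c c' d d' s s'. mul (T (c, c')) (mul (U (d, d')) (V (s, s'))))"
  have "convolution (convolution T U) V (a, b) = sweedler a (\<lambda>a1 a2. sweedler b (\<lambda>b1 b2. sweedler a1 (\<lambda>c d. sweedler b1 (\<lambda>c' d'. W c c' d d' a2 b2))))"
    unfolding convolution_def W_def using fT fU fV
    by (simp add: mul_sweedler_left mul_assoc fsupp_sweedler)
  also have "\<dots> = sweedler a (\<lambda>a1 a2. sweedler a1 (\<lambda>c d. sweedler b (\<lambda>b1 b2. sweedler b1 (\<lambda>c' d'. W c c' d d' a2 b2))))"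
    by (rule sweedler_cong, rule sweedler_swap)
  also have "\<dots> = sweedler a (\<lambda>p q. sweedler q (\<lambda>r s. sweedler b (\<lambda>b1 b2. sweedler b1 (\<lambda>c' d'. W p c' r d' s b2))))"
    by (rule sweedler_coassoc)
  also have "\<dots> = sweedler a (\<lambda>p q. sweedler q (\<lambda>r s. sweedler b (\<lambda>p' q'. sweedler q' (\<lambda>r' s'. W p p' r r' s s'))))"
    by (intro sweedler_cong sweedler_coassoc)
  also have "\<dots> = sweedler a (\<lambda>p q. sweedler b (\<lambda>p' q'. sweedler q (\<lambda>r s. sweedler q' (\<lambda>r' s'. W p p' r r' s s'))))"
    by (rule sweedler_cong, rule sweedler_swap[symmetric])
  also have "\<dots> = convolution T (convolution U V) (a, b)"
    unfolding convolution_def W_def using fT fU fV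
    by (simp add: mul_sweedler_right fsupp_sweedler)
  finally show "convolution (convolution T U) V ab = convolution T (convolution U V) ab" using ab by simp
qed

lemma convolution_unit_right:
  assumes fT: "\<And>z. fsupp (T z)"
  shows "convolution T conv_unit = T"
proof (rule ext)
  fix ab :: "'b \<times> 'b"
  obtain a b where ab: "ab = (a, b)" by (cases ab) auto
  have "convolution T conv_unit (a, b) = sweedler a (\<lambda>a1 a2. sweedler b (\<lambda>b1 b2. scal (e a2) (scal (e b2) (T (a1, b1)))))"
    unfolding convolution_def conv_unit_def using fT
    by (simp add: bil_scal_right scal_scal)
  also have "\<dots> = sweedler a (\<lambda>a1 a2. scal (e a2) (sweedler b (\<lambda>b1 b2. scal (e b2) (T (a1, b1)))))"
    using fT by (subst fsupp_linear_sweedler[OF fsupp_linear_scal]) auto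
  also have "\<dots> = T (a, b)"
    by (simp add: sweedler_counit_right)
  finally show "convolution T conv_unit ab = T ab" using ab by simp
qed

lemma convolution_unit_left:
  assumes fT: "\<And>z. fsupp (T z)"
  shows "convolution conv_unit T = T"
proof (rule ext)
  fix ab :: "'b \<times> 'b"
  obtain a b where ab: "ab = (a, b)" by (cases ab) auto
  have "convolution conv_unit T (a, b) = sweedler a (\<lambda>a1 a2. sweedler b (\<lambda>b1 b2. scal (e a1) (scal (e b1) (T (a2, b2)))))"
    unfolding convolution_def conv_unit_def using fT
    by (simp add: bil_scal_left scal_scal)
  also have "\<dots> = sweedler a (\<lambda>a1 a2. scal (e a1) (sweedler b (\<lambda>b1 b2. scal (e b1) (T (a2, b2)))))"
    using fT by (subst fsupp_linear_sweedler[OF fsupp_linear_scal]) auto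
  also have "\<dots> = T (a, b)"
    by (simp add: sweedler_counit_left)
  finally show "convolution conv_unit T ab = T ab" using ab by simp
qed

lemma antipode_left_lin: "fsupp v \<Longrightarrow> lin (\<lambda>(a, b). mul (S a) (basis b)) (lin D v) = scal (linf e v) u"
  by (subst lin_lin) (auto simp: antipode_left lin_scal_const)

lemma antipode_left_tens:
  assumes "fsupp X" "fsupp Y"
  shows "lin (\<lambda>(a, b). mul (S a) (basis b)) (tens X Y) = mul (lin S X) Y"
proof -
  have "lin (\<lambda>(a, b). mul (S a) (basis b)) (tens X Y) = lin (\<lambda>a. lin (\<lambda>b. mul (S a) (basis b)) Y) X"
    using assms by (simp add: lin_tens)
  also have "\<dots> = lin (\<lambda>a. mul (S a) Y) X"
    using assms by (simp add: fsupp_linear_eq_lin[OF fsupp_linear_bil_right, symmetric])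
  also have "\<dots> = mul (lin S X) Y"
    using assms by (subst fsupp_linear_lin_commute[OF fsupp_linear_bil_left]) auto
  finally show ?thesis .
qed

lemma D_mult_sweedler: "lin D (M a b) = sweedler a (\<lambda>a1 a2. sweedler b (\<lambda>b1 b2. tens (M a1 b1) (M a2 b2)))"
  unfolding D_mult bil_eq_lin_left sweedler_def tmult_def by (simp add: case_prod_unfold)

lemma convolution_antipode_mult: "convolution (\<lambda>ab. lin S (M (fst ab) (snd ab))) (\<lambda>ab. M (fst ab) (snd ab)) = conv_unit"
proof (rule ext)
  fix ab :: "'b \<times> 'b"
  obtain a b where ab: "ab = (a, b)" by (cases ab) auto
  have "lin (\<lambda>(a, b). mul (S a) (basis b)) (lin D (M a b))
      = sweedler a (\<lambda>a1 a2. sweedler b (\<lambda>b1 b2. lin (\<lambda>(a, b). mul (S a) (basis b)) (tens (M a1 b1) (M a2 b2))))"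
    unfolding D_mult_sweedler
    by (subst fsupp_linear_sweedler[OF fsupp_linear_lin], simp add: fsupp_sweedler fsupp_tens,
        rule sweedler_cong, subst fsupp_linear_sweedler[OF fsupp_linear_lin], simp add: fsupp_tens, rule refl)
  also have "\<dots> = convolution (\<lambda>ab. lin S (M (fst ab) (snd ab))) (\<lambda>ab. M (fst ab) (snd ab)) (a, b)"
    unfolding convolution_def by (simp add: antipode_left_tens)
  finally have "convolution (\<lambda>ab. lin S (M (fst ab) (snd ab))) (\<lambda>ab. M (fst ab) (snd ab)) (a, b) = conv_unit (a, b)"
    by (simp add: antipode_left_lin counit_mult conv_unit_def)
  then show "convolution (\<lambda>ab. lin S (M (fst ab) (snd ab))) (\<lambda>ab. M (fst ab) (snd ab)) ab = conv_unit ab"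
    using ab by simp
qed

lemma convolution_mult_antipode_op: "convolution (\<lambda>ab. M (fst ab) (snd ab)) (\<lambda>ab. mul (S (snd ab)) (S (fst ab))) = conv_unit"
proof (rule ext)
  fix ab :: "'b \<times> 'b"
  obtain a b where ab: "ab = (a, b)" by (cases ab) auto
  have "convolution (\<lambda>ab. M (fst ab) (snd ab)) (\<lambda>ab. mul (S (snd ab)) (S (fst ab))) (a, b)
     = sweedler a (\<lambda>a1 a2. sweedler b (\<lambda>b1 b2. mul (basis a1) (mul (mul (basis b1) (S b2)) (S a2))))"
    unfolding convolution_def
    by (simp add: mul_assoc bil_basis[symmetric, of M] del: bil_basis)
  also have "\<dots> = sweedler a (\<lambda>a1 a2. mul (basis a1) (mul (sweedler b (\<lambda>b1 b2. mul (basis b1) (S b2))) (S a2)))"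
    by (simp add: mul_sweedler_left mul_sweedler_right)
  also have "\<dots> = sweedler a (\<lambda>a1 a2. scal (e b) (mul (basis a1) (S a2)))"
    by (simp add: sweedler_antipode_right bil_scal_left bil_scal_right)
  also have "\<dots> = scal (e b) (scal (e a) u)"
    by (simp add: fsupp_linear_sweedler[OF fsupp_linear_scal, symmetric] sweedler_antipode_right)
  finally show "convolution (\<lambda>ab. M (fst ab) (snd ab)) (\<lambda>ab. mul (S (snd ab)) (S (fst ab))) ab = conv_unit ab"
    using ab by (simp add: conv_unit_def scal_scal mult.commute)
qed

lemma antipode_antimult: "lin S (M x y) = mul (S y) (S x)"
proof -
  define F1 where "F1 = (\<lambda>ab. lin S (M (fst ab) (snd ab)))"
  define m where "m = (\<lambda>ab :: 'b \<times> 'b. M (fst ab) (snd ab))"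
  define F2 where "F2 = (\<lambda>ab. mul (S (snd ab)) (S (fst ab)))"
  have f1: "\<And>z. fsupp (F1 z)" and f2: "\<And>z. fsupp (F2 z)" and f3: "\<And>z. fsupp (m z)"
    unfolding F1_def F2_def m_def by auto
  have "F1 = convolution F1 conv_unit" using convolution_unit_right[OF f1] by simp
  also have "\<dots> = convolution F1 (convolution m F2)" using convolution_mult_antipode_op unfolding m_def F2_def by simp
  also have "\<dots> = convolution (convolution F1 m) F2" using convolution_assoc[OF f1 f3 f2] by simp
  also have "\<dots> = convolution conv_unit F2" using convolution_antipode_mult unfolding m_def F1_def by simp
  also have "\<dots> = F2" using convolution_unit_left[OF f2] by simp
  finally have "F1 (x, y) = F2 (x, y)" by simp
  then show ?thesis unfolding F1_def F2_def by simp
qed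

lemma antipode_unit: "lin S u = u"
proof -
  have "lin (\<lambda>(a, b). mul (S a) (basis b)) (lin D u) = u"
    by (simp add: antipode_left_lin counit_unit)
  then have "mul (lin S u) u = u" by (simp add: D_unit antipode_left_tens)
  then show ?thesis using fsupp_lin[OF fsupp_unit fsupp_S] by simp
qed

end

section \<open>A finite central group of grouplikes\<close>

locale hopf_central_grouplikes = hopf_algebra M u D e S for M :: "'b \<Rightarrow> 'b \<Rightarrow> 'b vec" and u D e S +
  fixes G :: "'b vec set" and j :: "'b vec \<Rightarrow> 'b vec \<Rightarrow> complex"
  assumes FG: "finite_central_subgroup M u D G" and CJ: "char_iso M G j"
begin

lemma finite_G [simp, intro]: "finite G" using FG by (simp add: finite_central_subgroup_def)

lemma unit_in_G [simp, intro]: "u \<in> G" using FG by (simp add: finite_central_subgroup_def)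

lemma mul_in_G [simp, intro]: "g \<in> G \<Longrightarrow> h \<in> G \<Longrightarrow> mul g h \<in> G"
  using FG by (simp add: finite_central_subgroup_def)

lemma grouplike_G: "g \<in> G \<Longrightarrow> grouplike D g"
  using FG by (simp add: finite_central_subgroup_def)

lemma fsupp_G [simp, intro]: "g \<in> G \<Longrightarrow> fsupp g" using grouplike_G by (simp add: grouplike_def)

lemma nonzero_G: "g \<in> G \<Longrightarrow> g \<noteq> (\<lambda>_. 0)" using grouplike_G by (simp add: grouplike_def)

lemma D_G: "g \<in> G \<Longrightarrow> lin D g = tens g g" using grouplike_G by (simp add: grouplike_def)

lemma central_basis_G: "g \<in> G \<Longrightarrow> mul g (basis x) = mul (basis x) g"
  using FG by (simp add: finite_central_subgroup_def)

lemma inverse_exists_G: "g \<in> G \<Longrightarrow> \<exists>h\<in>G. mul g h = u"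
  using FG by (simp add: finite_central_subgroup_def)

lemma mul_commute_G: "g \<in> G \<Longrightarrow> fsupp v \<Longrightarrow> mul g v = mul v g"
  by (rule fsupp_linear_eqI[OF fsupp_linear_bil_right fsupp_linear_bil_left]) (auto simp: central_basis_G)

abbreviation gi where "gi g \<equiv> ginv M u G g"

lemma inverse_unique_G: "g \<in> G \<Longrightarrow> h \<in> G \<Longrightarrow> h' \<in> G \<Longrightarrow> mul g h = u \<Longrightarrow> mul g h' = u \<Longrightarrow> h = h'"
proof -
  assume a: "g \<in> G" "h \<in> G" "h' \<in> G" "mul g h = u" "mul g h' = u"
  have "h = mul (mul h g) h'" using a by (simp add: mul_assoc)
  also have "\<dots> = h'" using a mul_commute_G[of g h] by simp
  finally show ?thesis .
qed

lemma ginv_G: "g \<in> G \<Longrightarrow> gi g \<in> G \<and> mul g (gi g) = u"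
proof -
  assume g: "g \<in> G"
  obtain h where h: "h \<in> G" "mul g h = u" using inverse_exists_G[OF g] by blast
  have "\<exists>!h. h \<in> G \<and> mul g h = u"
  proof (rule ex1I[of _ h])
    show "h \<in> G \<and> mul g h = u" using h by simp
    fix h' assume "h' \<in> G \<and> mul g h' = u"
    then show "h' = h" using inverse_unique_G[of g h' h] g h by auto
  qed
  then show ?thesis unfolding ginv_def by (rule theI')
qed

lemma gi_in_G [simp, intro]: "g \<in> G \<Longrightarrow> gi g \<in> G" using ginv_G by blast

lemma mul_gi [simp]: "g \<in> G \<Longrightarrow> mul g (gi g) = u" using ginv_G by blast

lemma gi_mul [simp]: "g \<in> G \<Longrightarrow> mul (gi g) g = u" using ginv_G mul_commute_G by (metis fsupp_G)

lemma gi_eq: "g \<in> G \<Longrightarrow> h \<in> G \<Longrightarrow> mul g h = u \<Longrightarrow> gi g = h"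
  using inverse_unique_G[of g "gi g" h] by simp

lemma gi_gi [simp]: "g \<in> G \<Longrightarrow> gi (gi g) = g"
  by (rule gi_eq) auto

lemma gi_u [simp]: "gi u = u" by (rule gi_eq) auto

lemma mul_cancel_left_G: "g \<in> G \<Longrightarrow> h \<in> G \<Longrightarrow> h' \<in> G \<Longrightarrow> mul g h = mul g h' \<Longrightarrow> h = h'"
proof -
  assume a: "g \<in> G" "h \<in> G" "h' \<in> G" "mul g h = mul g h'"
  have "h = mul (mul (gi g) g) h" using a by simp
  also have "\<dots> = mul (gi g) (mul g h)" using a by (simp add: mul_assoc del: gi_mul)
  also have "\<dots> = mul (gi g) (mul g h')" using a by simp
  also have "\<dots> = h'" using a by (simp add: mul_assoc[symmetric])
  finally show ?thesis .
qed

lemma mul_gi_left [simp]: "g \<in> G \<Longrightarrow> h \<in> G \<Longrightarrow> mul g (mul (gi g) h) = h"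
  by (simp add: mul_assoc[symmetric])

lemma gi_mul_left [simp]: "g \<in> G \<Longrightarrow> h \<in> G \<Longrightarrow> mul (gi g) (mul g h) = h"
  by (simp add: mul_assoc[symmetric])

lemma gi_inj: "g \<in> G \<Longrightarrow> h \<in> G \<Longrightarrow> gi g = gi h \<Longrightarrow> g = h"
  by (metis gi_gi)

lemma bij_betw_mul_G: "g \<in> G \<Longrightarrow> bij_betw (\<lambda>h. mul g h) G G"
  unfolding bij_betw_def inj_on_def
  by (auto simp: image_def intro: mul_cancel_left_G) (metis gi_in_G mul_gi_left mul_in_G)

lemma bij_betw_gi: "bij_betw gi G G"
  unfolding bij_betw_def inj_on_def
  by (auto simp: image_def intro: gi_inj) (metis gi_in_G gi_gi)

lemma counit_G: "g \<in> G \<Longrightarrow> linf e g = 1"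
proof -
  assume g: "g \<in> G"
  have "lin (\<lambda>(a, b). scal (e a) (basis b)) (lin D g) = g"
    using g by (subst lin_lin) (auto simp: counit_left lin_basis_self)
  moreover have "lin (\<lambda>(a, b). scal (e a) (basis b)) (lin D g) = scal (linf e g) g"
    using g by (simp add: D_G lin_tens lin_scal_basis lin_scal_const)
  ultimately have "scal (linf e g) g = g" by simp
  then have "(linf e g - 1) * g p = 0" for p
    by (metis (no_types, lifting) left_diff_distrib' mult_1 right_minus_eq scal_def)
  then show ?thesis using nonzero_G[OF g] by (metis eq_iff_diff_eq_0 mult_eq_0_iff ext)
qed

lemma antipode_G: "g \<in> G \<Longrightarrow> lin S g = gi g"
proof -
  assume g: "g \<in> G"
  have "lin (\<lambda>(a, b). mul (S a) (basis b)) (lin D g) = scal (linf e g) u"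
    using g by (simp add: antipode_left_lin)
  then have h: "mul (lin S g) g = u" using g by (simp add: D_G antipode_left_tens counit_G)
  have "lin S g = mul (lin S g) (mul g (gi g))" using g by simp
  also have "\<dots> = gi g" using g by (simp add: mul_assoc[symmetric] h del: mul_gi)
  finally show ?thesis .
qed

subsection \<open>Characters\<close>

lemma is_char_j: "y \<in> G \<Longrightarrow> is_char M G (j y)" using CJ by (simp add: char_iso_def)

lemma j_mult_left: "y \<in> G \<Longrightarrow> z \<in> G \<Longrightarrow> x \<in> G \<Longrightarrow> j (mul y z) x = j y x * j z x"
  using CJ by (simp add: char_iso_def)

lemma j_inj: "y \<in> G \<Longrightarrow> z \<in> G \<Longrightarrow> (\<forall>x\<in>G. j y x = j z x) \<Longrightarrow> y = z"
  using CJ by (simp add: char_iso_def)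

lemma char_unit: "is_char M G \<chi> \<Longrightarrow> \<chi> u = 1"
proof -
  assume c: "is_char M G \<chi>"
  have "\<chi> u = \<chi> u * \<chi> u" using c unfolding is_char_def by (metis unit_in_G mul_unit_left fsupp_unit)
  moreover have "\<chi> u \<noteq> 0" using c by (simp add: is_char_def)
  ultimately show ?thesis by (metis mult_cancel_left1)
qed

lemma char_gi: "is_char M G \<chi> \<Longrightarrow> x \<in> G \<Longrightarrow> \<chi> (gi x) = inverse (\<chi> x)"
proof -
  assume c: "is_char M G \<chi>" and x: "x \<in> G"
  have "\<chi> x * \<chi> (gi x) = 1" using c x char_unit[OF c] unfolding is_char_def
    by (metis gi_in_G mul_gi)
  then show ?thesis by (simp add: field_simps inverse_eq_divide) (metis mult.commute nonzero_eq_divide_eq zero_neq_one mult_zero_left)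
qed

lemma sum_char: "is_char M G \<chi> \<Longrightarrow> (\<Sum>x\<in>G. \<chi> x) = (if \<forall>x\<in>G. \<chi> x = 1 then of_nat (card G) else 0)"
proof -
  assume c: "is_char M G \<chi>"
  show ?thesis
  proof (cases "\<forall>x\<in>G. \<chi> x = 1")
    case True then show ?thesis by simp
  next
    case False
    then obtain x0 where x0: "x0 \<in> G" "\<chi> x0 \<noteq> 1" by blast
    have "(\<Sum>x\<in>G. \<chi> x) = (\<Sum>x\<in>G. \<chi> (mul x0 x))"
      using sum.reindex_bij_betw[OF bij_betw_mul_G[OF x0(1)], of \<chi>] by simp
    also have "\<dots> = \<chi> x0 * (\<Sum>x\<in>G. \<chi> x)"
      using c x0 by (simp add: is_char_def sum_distrib_left)
    finally have "(1 - \<chi> x0) * (\<Sum>x\<in>G. \<chi> x) = 0" by (simp add: algebra_simps)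
    then show ?thesis using x0 False by auto
  qed
qed

lemma j_nonzero: "y \<in> G \<Longrightarrow> x \<in> G \<Longrightarrow> j y x \<noteq> 0"
  using is_char_j by (simp add: is_char_def)

lemma j_mult_right: "y \<in> G \<Longrightarrow> x \<in> G \<Longrightarrow> z \<in> G \<Longrightarrow> j y (mul x z) = j y x * j y z"
  using is_char_j by (simp add: is_char_def)

lemma is_char_j_column: "x \<in> G \<Longrightarrow> is_char M G (\<lambda>y. j y x)"
  by (simp add: is_char_def j_nonzero j_mult_left)

lemma j_unit_left: "x \<in> G \<Longrightarrow> j u x = 1"
  using char_unit[OF is_char_j_column] .

lemma j_unit_right: "y \<in> G \<Longrightarrow> j y u = 1"
  using char_unit[OF is_char_j] .

lemma j_gi_left: "y \<in> G \<Longrightarrow> x \<in> G \<Longrightarrow> j (gi y) x = inverse (j y x)"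
  using char_gi[OF is_char_j_column] .

lemma j_gi_right: "y \<in> G \<Longrightarrow> x \<in> G \<Longrightarrow> j y (gi x) = inverse (j y x)"
  using char_gi[OF is_char_j] .

lemma sum_j_row: "y \<in> G \<Longrightarrow> (\<Sum>x\<in>G. j y x) = (if y = u then of_nat (card G) else 0)"
proof -
  assume y: "y \<in> G"
  have "(\<forall>x\<in>G. j y x = 1) \<longleftrightarrow> y = u"
    using j_inj[of y u] y j_unit_left by auto
  then show ?thesis using sum_char[OF is_char_j[OF y]] by simp
qed

lemma sum_j_column_char: "x \<in> G \<Longrightarrow> (\<Sum>y\<in>G. j y x) = (if \<forall>y\<in>G. j y x = 1 then of_nat (card G) else 0)"
  using sum_char[OF is_char_j_column] .

text \<open>Counting: the column sums of the character table add up to |G|, as the row sums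
do, and each column whose entries are all 1 contributes |G|.\<close>

lemma j_separates: "x \<in> G \<Longrightarrow> \<forall>y\<in>G. j y x = 1 \<Longrightarrow> x = u"
proof -
  assume x: "x \<in> G" "\<forall>y\<in>G. j y x = 1"
  define K where "K = {x\<in>G. \<forall>y\<in>G. j y x = 1}"
  have "of_nat (card K) * of_nat (card G) = (\<Sum>x\<in>G. if x \<in> K then of_nat (card G) else (0::complex))"
    by (simp add: sum.If_cases K_def Int_def conj_commute)
  also have "\<dots> = (\<Sum>x\<in>G. \<Sum>y\<in>G. j y x)"
    by (rule sum.cong) (auto simp: K_def sum_j_column_char)
  also have "\<dots> = (\<Sum>y\<in>G. \<Sum>x\<in>G. j y x)" by (rule sum.swap)
  also have "\<dots> = (\<Sum>y\<in>G. if y = u then of_nat (card G) else 0)"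
    by (rule sum.cong) (auto simp: sum_j_row)
  also have "\<dots> = of_nat (card G)" by simp
  finally have "of_nat (card K) * of_nat (card G) = (of_nat (card G) :: complex)" .
  moreover have "card G \<noteq> 0" using finite_G unit_in_G by (metis card_0_eq empty_iff)
  ultimately have "card K = 1" by simp
  moreover have "u \<in> K" "x \<in> K" unfolding K_def using x by (auto simp: j_unit_right)
  ultimately show "x = u" by (metis card_1_singletonE singletonD)
qed

lemma sum_j_column: "x \<in> G \<Longrightarrow> (\<Sum>y\<in>G. j y x) = (if x = u then of_nat (card G) else 0)"
proof -
  assume x: "x \<in> G"
  then have "(\<forall>y\<in>G. j y x = 1) \<longleftrightarrow> x = u" using j_separates j_unit_right by blast
  then show ?thesis using sum_j_column_char[OF x] by simp
qed

subsection \<open>The idempotents e_x\<close>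

abbreviation N :: complex where "N \<equiv> of_nat (card G)"

lemma card_G_nonzero: "N \<noteq> 0"
  using unit_in_G finite_G by (metis card_0_eq empty_iff of_nat_eq_0_iff)

abbreviation ee :: "'b vec \<Rightarrow> 'b vec" where "ee \<equiv> idem G j"

lemma idem_eq_lincomb: "ee x = lincomb G (\<lambda>y. inverse (j y x) / N) (\<lambda>y. y)"
  unfolding idem_def lincomb_def by (auto intro!: ext simp: sum_distrib_left)

lemma fsupp_idem [simp, intro]: "fsupp (ee x)"
  unfolding idem_eq_lincomb by (rule fsupp_lincomb) auto

lemma mul_G_idem: "g \<in> G \<Longrightarrow> x \<in> G \<Longrightarrow> mul g (ee x) = scal (j g x) (ee x)"
proof -
  assume g: "g \<in> G" and x: "x \<in> G"
  define c where "c y = inverse (j y x) / N" for y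
  have "mul g (ee x) = lincomb G c (\<lambda>y. mul g y)"
    unfolding idem_eq_lincomb c_def by (subst bil_lincomb_right) auto
  also have "\<dots> = lincomb G (\<lambda>y. j g x * c (mul g y)) (\<lambda>y. mul g y)"
    by (rule lincomb_cong) (use g x j_nonzero in \<open>auto simp: c_def j_mult_left field_simps\<close>)
  also have "\<dots> = scal (j g x) (lincomb G (\<lambda>y. c (mul g y)) (\<lambda>y. mul g y))"
    unfolding lincomb_def scal_def by (auto intro!: ext simp: sum_distrib_left mult.assoc)
  also have "lincomb G (\<lambda>y. c (mul g y)) (\<lambda>y. mul g y) = ee x"
    unfolding idem_eq_lincomb c_def[symmetric] by (rule lincomb_reindex[OF bij_betw_mul_G[OF g]])
  finally show ?thesis .
qed

lemma idem_orthogonal: "x \<in> G \<Longrightarrow> x' \<in> G \<Longrightarrow> mul (ee x) (ee x') = (if x = x' then ee x else (\<lambda>p. 0))"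
proof -
  assume x: "x \<in> G" and x': "x' \<in> G"
  have "mul (ee x) (ee x') = lincomb G (\<lambda>y. inverse (j y x) / N) (\<lambda>y. mul y (ee x'))"
    unfolding idem_eq_lincomb[of x] by (subst bil_lincomb_left) auto
  also have "\<dots> = lincomb G (\<lambda>y. inverse (j y x) / N) (\<lambda>y. scal (j y x') (ee x'))"
    by (rule lincomb_cong) (auto simp: mul_G_idem x')
  also have "\<dots> = scal ((\<Sum>y\<in>G. j y (mul (gi x) x')) / N) (ee x')"
    unfolding lincomb_scal_const
    by (rule arg_cong[where f="\<lambda>c. scal c (ee x')"])
       (use x x' in \<open>auto simp: sum_divide_distrib j_mult_right j_gi_right intro!: sum.cong\<close>)
  also have "\<dots> = (if x = x' then ee x else (\<lambda>p. 0))"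
  proof -
    have "mul (gi x) x' = u \<longleftrightarrow> x = x'"
      using x x' gi_eq[of "gi x" x'] by auto
    then show ?thesis using x x' card_G_nonzero by (auto simp: sum_j_column scal_def)
  qed
  finally show ?thesis .
qed

lemma sum_idem: "lincomb G (\<lambda>_. 1) ee = u"
proof -
  have "lincomb G (\<lambda>_. 1) ee = lincomb G (\<lambda>y. \<Sum>x\<in>G. inverse (j y x) / N) (\<lambda>y. y)"
    unfolding idem_eq_lincomb lincomb_swap by simp
  also have "\<dots> = lincomb G (\<lambda>y. if y = u then 1 else 0) (\<lambda>y. y)"
  proof (rule lincomb_cong[OF _ refl])
    fix y assume y: "y \<in> G"
    have "(\<Sum>x\<in>G. inverse (j y x) / N) = (\<Sum>x\<in>G. j (gi y) x) / N"
      using y by (simp add: j_gi_left sum_divide_distrib)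
    also have "\<dots> = (if y = u then 1 else 0)"
      using y card_G_nonzero by (simp add: sum_j_row) (metis gi_gi gi_u)
    finally show "(\<Sum>x\<in>G. inverse (j y x) / N) = (if y = u then 1 else 0)" .
  qed
  also have "\<dots> = u" by (simp add: lincomb_delta)
  finally show ?thesis .
qed

lemma counit_idem: "x \<in> G \<Longrightarrow> linf e (ee x) = (if x = u then 1 else 0)"
proof -
  assume x: "x \<in> G"
  have "linf e (ee x) = (\<Sum>y\<in>G. inverse (j y x) / N)"
    unfolding idem_eq_lincomb by (subst linf_lincomb) (auto simp: counit_G)
  also have "\<dots> = (\<Sum>y\<in>G. j y (gi x)) / N"
    using x by (simp add: j_gi_right sum_divide_distrib)
  also have "\<dots> = (if x = u then 1 else 0)"
    using x card_G_nonzero by (simp add: sum_j_column) (metis gi_gi gi_u)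
  finally show ?thesis .
qed

lemma antipode_idem: "x \<in> G \<Longrightarrow> lin S (ee x) = ee (gi x)"
proof -
  assume x: "x \<in> G"
  have "lin S (ee x) = lincomb G (\<lambda>y. inverse (j y x) / N) gi"
    unfolding idem_eq_lincomb by (subst lin_lincomb) (auto simp: antipode_G intro!: lincomb_cong)
  also have "\<dots> = lincomb G (\<lambda>y. (\<lambda>y. inverse (j y (gi x)) / N) (gi y)) (\<lambda>y. gi y)"
    by (rule lincomb_cong) (use x in \<open>auto simp: j_gi_right j_gi_left\<close>)
  also have "\<dots> = ee (gi x)"
    unfolding idem_eq_lincomb by (rule lincomb_reindex[OF bij_betw_gi])
  finally show ?thesis .
qed

lemma idem_commute: "fsupp v \<Longrightarrow> mul (ee x) v = mul v (ee x)"
  unfolding idem_eq_lincomb by (simp add: bil_lincomb_left bil_lincomb_right) (rule lincomb_cong[OF refl], rule mul_commute_G, auto)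

lemma G_eq_lincomb_idem: "y \<in> G \<Longrightarrow> lincomb G (j y) ee = y"
proof -
  assume y: "y \<in> G"
  have "lincomb G (j y) ee = lincomb G (\<lambda>y'. \<Sum>a\<in>G. j y a * (inverse (j y' a) / N)) (\<lambda>y. y)"
    unfolding idem_eq_lincomb lincomb_swap by simp
  also have "\<dots> = lincomb G (\<lambda>y'. if y' = y then 1 else 0) (\<lambda>y. y)"
  proof (rule lincomb_cong[OF _ refl])
    fix y' assume y': "y' \<in> G"
    have "(\<Sum>a\<in>G. j y a * (inverse (j y' a) / N)) = (\<Sum>a\<in>G. j (mul y (gi y')) a) / N"
      using y y' by (simp add: j_mult_left j_gi_left sum_divide_distrib)
    also have "\<dots> = (if y' = y then 1 else 0)"
    proof -
      have "mul y (gi y') = u \<longleftrightarrow> y' = y"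
        using y y' gi_eq[of y "gi y'"] gi_inj[of y y'] by auto
      then show ?thesis using y y' card_G_nonzero by (simp add: sum_j_row)
    qed
    finally show "(\<Sum>a\<in>G. j y a * (inverse (j y' a) / N)) = (if y' = y then 1 else 0)" .
  qed
  also have "\<dots> = y" using y by (simp add: lincomb_delta)
  finally show ?thesis .
qed

definition idem2 :: "'b vec \<times> 'b vec \<Rightarrow> ('b \<times> 'b) vec" where
  "idem2 k = tens (ee (fst k)) (ee (snd k))"

definition idem3 :: "'b vec \<times> 'b vec \<times> 'b vec \<Rightarrow> ('b \<times> 'b \<times> 'b) vec" where
  "idem3 k = tens (ee (fst k)) (idem2 (snd k))"

definition idem4 :: "'b vec \<times> 'b vec \<times> 'b vec \<times> 'b vec \<Rightarrow> ('b \<times> 'b \<times> 'b \<times> 'b) vec" where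
  "idem4 k = tens (ee (fst k)) (idem3 (snd k))"

abbreviation "G2 \<equiv> G \<times> G"

abbreviation "G3 \<equiv> G \<times> G2"

abbreviation "G4 \<equiv> G \<times> G3"

lemma fsupp_idem2 [simp, intro]: "fsupp (idem2 k)" by (auto simp: idem2_def)

lemma fsupp_idem3 [simp, intro]: "fsupp (idem3 k)" by (auto simp: idem3_def)

lemma fsupp_idem4 [simp, intro]: "fsupp (idem4 k)" by (auto simp: idem4_def)

lemma idem2_orthogonal: "k \<in> G2 \<Longrightarrow> k' \<in> G2 \<Longrightarrow> bil (M2 M) (idem2 k) (idem2 k') = (if k = k' then idem2 k else (\<lambda>p. 0))"
  unfolding idem2_def by (auto simp: bil_tmult idem_orthogonal prod_eq_iff)

lemma idem3_orthogonal: "k \<in> G3 \<Longrightarrow> k' \<in> G3 \<Longrightarrow> bil (M3 M) (idem3 k) (idem3 k') = (if k = k' then idem3 k else (\<lambda>p. 0))"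
  unfolding idem3_def by (auto simp: bil_tmult idem_orthogonal idem2_orthogonal prod_eq_iff)

lemma idem4_orthogonal: "k \<in> G4 \<Longrightarrow> k' \<in> G4 \<Longrightarrow> bil (M4 M) (idem4 k) (idem4 k') = (if k = k' then idem4 k else (\<lambda>p. 0))"
  unfolding idem4_def by (auto simp: bil_tmult idem_orthogonal idem3_orthogonal prod_eq_iff)

lemma idem2_lincomb_mult: "bil (M2 M) (lincomb G2 c idem2) (lincomb G2 d idem2) = lincomb G2 (\<lambda>k. c k * d k) idem2"
  by (rule bil_lincomb_orthogonal) (auto simp: idem2_orthogonal)

lemma idem3_lincomb_mult: "bil (M3 M) (lincomb G3 c idem3) (lincomb G3 d idem3) = lincomb G3 (\<lambda>k. c k * d k) idem3"
  by (rule bil_lincomb_orthogonal) (auto simp: idem3_orthogonal)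

lemma idem4_lincomb_mult: "bil (M4 M) (lincomb G4 c idem4) (lincomb G4 d idem4) = lincomb G4 (\<lambda>k. c k * d k) idem4"
  by (rule bil_lincomb_orthogonal) (auto simp: idem4_orthogonal)

lemma central_idem: "central M (ee x)"
  unfolding central_def by (simp add: idem_commute)

lemma central_idem2: "central (M2 M) (idem2 k)"
  unfolding idem2_def by (rule central_tens) (auto simp: central_idem)

lemma central_idem3: "central (M3 M) (idem3 k)"
  unfolding idem3_def by (rule central_tens) (auto simp: central_idem central_idem2)

lemma sum_idem2: "lincomb G2 (\<lambda>_. 1) idem2 = tens u u"
  using tens_lincomb[of G "\<lambda>_. 1" ee G "\<lambda>_. 1" ee] by (simp add: sum_idem idem2_def[abs_def])

lemma sum_idem3: "lincomb G3 (\<lambda>_. 1) idem3 = tens u (tens u u)"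
  using tens_lincomb[of G "\<lambda>_. 1" ee G2 "\<lambda>_. 1" idem2] by (simp add: sum_idem sum_idem2 idem3_def[abs_def])

lemma sum_j_idem_coeff:
  assumes "x \<in> G" "a \<in> G" "b \<in> G"
  shows "(\<Sum>y\<in>G. inverse (j y x) / N * (j y a * j y b)) = (if mul a b = x then 1 else 0)"
proof -
  have "(\<Sum>y\<in>G. inverse (j y x) / N * (j y a * j y b)) = (\<Sum>y\<in>G. j y (mul (gi x) (mul a b))) / N"
    unfolding sum_divide_distrib
    by (rule sum.cong[OF refl]) (use assms in \<open>simp add: j_mult_right j_gi_right field_simps\<close>)
  moreover have "mul (gi x) (mul a b) = u \<longleftrightarrow> mul a b = x"
    using assms gi_eq[of "gi x" "mul a b"] by auto
  ultimately show ?thesis using assms card_G_nonzero by (simp add: sum_j_column)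
qed

lemma D_idem: "x \<in> G \<Longrightarrow> lin D (ee x) = lincomb G (\<lambda>_. 1) (\<lambda>a. idem2 (a, mul (gi a) x))"
proof -
  assume x: "x \<in> G"
  define c where "c y = inverse (j y x) / N" for y
  have "lin D (ee x) = lincomb G c (\<lambda>y. tens y y)"
    unfolding idem_eq_lincomb c_def[symmetric] by (subst lin_lincomb) (auto simp: D_G intro!: lincomb_cong)
  also have "\<dots> = lincomb G c (\<lambda>y. lincomb G2 (\<lambda>k. j y (fst k) * j y (snd k)) idem2)"
    by (rule lincomb_cong[OF refl]) (simp add: tens_lincomb[symmetric] G_eq_lincomb_idem idem2_def[abs_def])
  also have "\<dots> = lincomb G2 (\<lambda>k. if mul (fst k) (snd k) = x then 1 else 0) idem2"
    unfolding lincomb_swap c_def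
    by (rule lincomb_cong[OF _ refl], rule sum_j_idem_coeff) (use x in auto)
  also have "\<dots> = lincomb G (\<lambda>_. 1) (\<lambda>a. lincomb G (\<lambda>b. if b = mul (gi a) x then 1 else 0) (\<lambda>b. idem2 (a, b)))"
    unfolding lincomb_Times_nested using x by (intro lincomb_cong) auto
  also have "\<dots> = lincomb G (\<lambda>_. 1) (\<lambda>a. idem2 (a, mul (gi a) x))"
    using x by (intro lincomb_cong) (simp_all add: lincomb_delta)
  finally show ?thesis .
qed

lemma idem3_eq: "idem3 (x, y, z) = tens (ee x) (tens (ee y) (ee z))"
  by (simp add: idem3_def idem2_def)

lemma idem4_eq: "idem4 (x, y, z, t) = tens (ee x) (tens (ee y) (tens (ee z) (ee t)))"
  by (simp add: idem4_def idem3_def idem2_def)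

subsection \<open>The quasi-Hopf algebra\<close>

lemma phi_G_eq_lincomb: "phi_G G w j = lincomb G3 (uncurry3 (\<lambda>x y z. inverse (w x y z))) idem3"
proof (rule ext)
  fix t :: "'b \<times> 'b \<times> 'b"
  obtain p q r where t: "t = (p, q, r)" by (cases t) auto
  show "phi_G G w j t = lincomb G3 (uncurry3 (\<lambda>x y z. inverse (w x y z))) idem3 t"
    unfolding t phi_G_def lincomb_def uncurry3_def idem3_def idem2_def tens_def
    by (simp add: sum.cartesian_product case_prod_beta mult.assoc)
qed

lemma beta_G_eq_lincomb: "beta_G M u G w j = lincomb G (\<lambda>x. w x (gi x) x) ee"
  unfolding beta_G_def lincomb_def by simp

lemma lin_idDid_idem3:
  assumes "k \<in> G3"
  shows "lin (idDid D) (idem3 k) = lincomb G (\<lambda>_. 1) (\<lambda>a. idem4 (fst k, a, mul (gi a) (fst (snd k)), snd (snd k)))"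
proof -
  obtain x y z where k: "k = (x, y, z)" "x \<in> G" "y \<in> G" "z \<in> G" using assms by auto
  show ?thesis
    unfolding k idem3_eq using k(2-4)
    by (simp add: lin_idDid_tens D_idem tens2r_lincomb_left tens_lincomb_right idem2_def tens2r_tens idem4_eq)
qed

lemma lin_iidD_idem3:
  assumes "k \<in> G3"
  shows "lin (iidD D) (idem3 k) = lincomb G (\<lambda>_. 1) (\<lambda>a. idem4 (fst k, fst (snd k), a, mul (gi a) (snd (snd k))))"
proof -
  obtain x y z where k: "k = (x, y, z)" "x \<in> G" "y \<in> G" "z \<in> G" using assms by auto
  show ?thesis
    unfolding k idem3_eq using k(2-4)
    by (simp add: lin_iidD_tens D_idem tens_lincomb_right idem2_def idem4_eq)
qed

lemma lin_Diid_idem3: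
  assumes "k \<in> G3"
  shows "lin (Diid D) (idem3 k) = lincomb G (\<lambda>_. 1) (\<lambda>a. idem4 (a, mul (gi a) (fst k), fst (snd k), snd (snd k)))"
proof -
  obtain x y z where k: "k = (x, y, z)" "x \<in> G" "y \<in> G" "z \<in> G" using assms by auto
  show ?thesis
    unfolding k idem3_eq using k(2-4)
    by (simp add: lin_Diid_tens D_idem tens2r_lincomb_left idem2_def tens2r_tens idem4_eq)
qed

lemma lin_lincomb_idem3: "lin T (lincomb G3 c idem3) = lincomb G3 c (\<lambda>k. lin T (idem3 k))"
  by (rule lin_lincomb) auto

lemma lin_idDid_lincomb_idem3: "lin (idDid D) (lincomb G3 c idem3) = lincomb G4 (\<lambda>k. c (fst k, mul (fst (snd k)) (fst (snd (snd k))), snd (snd (snd k)))) idem4"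
proof -
  have "lin (idDid D) (lincomb G3 c idem3) = lincomb G3 c (\<lambda>k. lincomb G (\<lambda>_. 1) (\<lambda>a. idem4 (fst k, a, mul (gi a) (fst (snd k)), snd (snd k))))"
    unfolding lin_lincomb_idem3 by (rule lincomb_cong) (auto simp: lin_idDid_idem3)
  also have "\<dots> = lincomb (G3 \<times> G) (\<lambda>ka. c (fst ka) * 1) (\<lambda>ka. idem4 (fst (fst ka), snd ka, mul (gi (snd ka)) (fst (snd (fst ka))), snd (snd (fst ka))))"
    by (rule lincomb_nested_Times)
  also have "\<dots> = lincomb G4 (\<lambda>k. c (fst k, mul (fst (snd k)) (fst (snd (snd k))), snd (snd (snd k)))) idem4"
    by (rule trans[OF lincomb_cong lincomb_reindex_inverse[where i="\<lambda>k. ((fst k, mul (fst (snd k)) (fst (snd (snd k))), snd (snd (snd k))), fst (snd k))"]])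
       (auto simp: mul_assoc[symmetric])
  finally show ?thesis .
qed

lemma lin_iidD_lincomb_idem3: "lin (iidD D) (lincomb G3 c idem3) = lincomb G4 (\<lambda>k. c (fst k, fst (snd k), mul (fst (snd (snd k))) (snd (snd (snd k))))) idem4"
proof -
  have "lin (iidD D) (lincomb G3 c idem3) = lincomb G3 c (\<lambda>k. lincomb G (\<lambda>_. 1) (\<lambda>a. idem4 (fst k, fst (snd k), a, mul (gi a) (snd (snd k)))))"
    unfolding lin_lincomb_idem3 by (rule lincomb_cong) (auto simp: lin_iidD_idem3)
  also have "\<dots> = lincomb (G3 \<times> G) (\<lambda>ka. c (fst ka) * 1) (\<lambda>ka. idem4 (fst (fst ka), fst (snd (fst ka)), snd ka, mul (gi (snd ka)) (snd (snd (fst ka)))))"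
    by (rule lincomb_nested_Times)
  also have "\<dots> = lincomb G4 (\<lambda>k. c (fst k, fst (snd k), mul (fst (snd (snd k))) (snd (snd (snd k))))) idem4"
    by (rule trans[OF lincomb_cong lincomb_reindex_inverse[where i="\<lambda>k. ((fst k, fst (snd k), mul (fst (snd (snd k))) (snd (snd (snd k)))), fst (snd (snd k)))"]])
       (auto simp: mul_assoc[symmetric])
  finally show ?thesis .
qed

lemma lin_Diid_lincomb_idem3: "lin (Diid D) (lincomb G3 c idem3) = lincomb G4 (\<lambda>k. c (mul (fst k) (fst (snd k)), fst (snd (snd k)), snd (snd (snd k)))) idem4"
proof -
  have "lin (Diid D) (lincomb G3 c idem3) = lincomb G3 c (\<lambda>k. lincomb G (\<lambda>_. 1) (\<lambda>a. idem4 (a, mul (gi a) (fst k), fst (snd k), snd (snd k))))"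
    unfolding lin_lincomb_idem3 by (rule lincomb_cong) (auto simp: lin_Diid_idem3)
  also have "\<dots> = lincomb (G3 \<times> G) (\<lambda>ka. c (fst ka) * 1) (\<lambda>ka. idem4 (snd ka, mul (gi (snd ka)) (fst (fst ka)), fst (snd (fst ka)), snd (snd (fst ka))))"
    by (rule lincomb_nested_Times)
  also have "\<dots> = lincomb G4 (\<lambda>k. c (mul (fst k) (fst (snd k)), fst (snd (snd k)), snd (snd (snd k)))) idem4"
    by (rule trans[OF lincomb_cong lincomb_reindex_inverse[where i="\<lambda>k. ((mul (fst k) (fst (snd k)), fst (snd (snd k)), snd (snd (snd k))), fst k)"]])
       (auto simp: mul_assoc[symmetric])
  finally show ?thesis .
qed

lemma unit_tens_lincomb_idem3: "(\<lambda>(p, q, r, s). u p * lincomb G3 c idem3 (q, r, s)) = lincomb G4 (\<lambda>k. c (snd k)) idem4"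
proof -
  have "(\<lambda>(p, q, r, s). u p * lincomb G3 c idem3 (q, r, s)) = tens u (lincomb G3 c idem3)"
    by (auto simp: tens_def intro!: ext)
  also have "\<dots> = tens (lincomb G (\<lambda>_. 1) ee) (lincomb G3 c idem3)" by (simp add: sum_idem)
  also have "\<dots> = lincomb G4 (\<lambda>k. c (snd k)) idem4"
    unfolding tens_lincomb by (rule lincomb_cong) (auto simp: idem4_def)
  finally show ?thesis .
qed

lemma lincomb_idem3_tens_unit: "(\<lambda>(p, q, r, s). lincomb G3 c idem3 (p, q, r) * u s) = lincomb G4 (\<lambda>k. c (fst k, fst (snd k), fst (snd (snd k)))) idem4"
proof -
  have "(\<lambda>(p, q, r, s). lincomb G3 c idem3 (p, q, r) * u s) = tens3r (lincomb G3 c idem3) (lincomb G (\<lambda>_. 1) ee)"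
    by (simp add: tens3r_def sum_idem)
  also have "\<dots> = lincomb (G3 \<times> G) (\<lambda>k. c (fst k) * 1) (\<lambda>k. tens3r (idem3 (fst k)) (ee (snd k)))"
    by (rule tens3r_lincomb)
  also have "\<dots> = lincomb (G3 \<times> G) (\<lambda>k. c (fst k)) (\<lambda>k. idem4 (fst (fst k), fst (snd (fst k)), snd (snd (fst k)), snd k))"
    by (rule lincomb_cong) (auto simp: idem3_def idem2_def idem4_def tens3r_tens)
  also have "\<dots> = lincomb G4 (\<lambda>k. c (fst k, fst (snd k), fst (snd (snd k)))) idem4"
    by (rule trans[OF lincomb_cong lincomb_reindex_inverse[where i="\<lambda>k. ((fst k, fst (snd k), fst (snd (snd k))), snd (snd (snd k)))"]])
       auto
  finally show ?thesis .
qed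

lemma fsupp_lincomb_idem3: "fsupp (lincomb G3 c idem3)" by (rule fsupp_lincomb) auto

lemma phi_G_pentagon:
  assumes W: "normalized_3cocycle M u G w"
  shows "bil (M4 M) (bil (M4 M) (\<lambda>(p, q, r, s). u p * phi_G G w j (q, r, s)) (lin (idDid D) (phi_G G w j)))
           (\<lambda>(p, q, r, s). phi_G G w j (p, q, r) * u s)
        = bil (M4 M) (lin (iidD D) (phi_G G w j)) (lin (Diid D) (phi_G G w j))"
  unfolding phi_G_eq_lincomb unit_tens_lincomb_idem3 lin_idDid_lincomb_idem3 lincomb_idem3_tens_unit lin_iidD_lincomb_idem3 lin_Diid_lincomb_idem3 idem4_lincomb_mult
proof (rule lincomb_cong[OF _ refl])
  fix k assume k: "k \<in> G4"
  obtain x y z t where kk: "k = (x, y, z, t)" "x \<in> G" "y \<in> G" "z \<in> G" "t \<in> G" using k by auto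
  have co: "w y z t * w x (mul y z) t * w x y z = w (mul x y) z t * w x y (mul z t)"
    using W kk by (simp add: normalized_3cocycle_def)
  show "uncurry3 (\<lambda>x y z. inverse (w x y z)) (snd k) *
        uncurry3 (\<lambda>x y z. inverse (w x y z)) (fst k, mul (fst (snd k)) (fst (snd (snd k))), snd (snd (snd k))) *
        uncurry3 (\<lambda>x y z. inverse (w x y z)) (fst k, fst (snd k), fst (snd (snd k))) =
        uncurry3 (\<lambda>x y z. inverse (w x y z)) (fst k, fst (snd k), mul (fst (snd (snd k))) (snd (snd (snd k)))) *
        uncurry3 (\<lambda>x y z. inverse (w x y z)) (mul (fst k) (fst (snd k)), fst (snd (snd k)), snd (snd (snd k)))"
    unfolding kk uncurry3_def using co
    by (simp add: mult_inverse_of_nat_commute flip: inverse_mult_distrib)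
qed

lemma idem_mul_lincomb: "x \<in> G \<Longrightarrow> mul (ee x) (lincomb G c ee) = scal (c x) (ee x)"
proof -
  assume x: "x \<in> G"
  have "mul (ee x) (lincomb G c ee) = lincomb G c (\<lambda>a. mul (ee x) (ee a))" by (simp add: bil_lincomb_right)
  also have "\<dots> = lincomb G (\<lambda>a. if a = x then c a else 0) ee"
    unfolding lincomb_def using x by (auto intro!: ext sum.cong simp: idem_orthogonal)
  also have "\<dots> = scal (c x) (ee x)" using x by (simp add: lincomb_delta)
  finally show ?thesis .
qed

lemma idem_orthogonal_scal: "x \<in> G \<Longrightarrow> y \<in> G \<Longrightarrow> mul (ee x) (ee y) = scal (if x = y then 1 else 0) (ee x)"
  by (auto simp: idem_orthogonal scal_def)

lemma phi_G_counit:
  assumes W: "normalized_3cocycle M u G w"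
  shows "lin (\<lambda>(a, b, c). scal (e b) (basis (a, c))) (phi_G G w j) = tens u u"
proof -
  define F where "F v w z = scal (linf e w) (tens v z)" for v w z :: "'b vec"
  have F_basis: "(\<lambda>(a, b, c). scal (e b) (basis (a, c))) = (\<lambda>(a, b, c). F (basis a) (basis b) (basis c))"
    by (auto simp: F_def intro!: ext)
  have on_idem3: "lin (\<lambda>(a, b, c). scal (e b) (basis (a, c))) (idem3 k) = scal (if fst (snd k) = u then 1 else 0) (idem2 (fst k, snd (snd k)))"
    if k: "k \<in> G3" for k
  proof -
    obtain x y z where kk: "k = (x, y, z)" "x \<in> G" "y \<in> G" "z \<in> G" using k by auto
    have "lin (\<lambda>(a, b, c). scal (e b) (basis (a, c))) (idem3 k) = F (ee x) (ee y) (ee z)"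
      unfolding F_basis kk idem3_eq
    proof (rule lin_trilinear)
      show "fsupp_linear (\<lambda>v. F v (ee y) (ee z))" unfolding F_def
        by (rule fsupp_linear_comp[OF fsupp_linear_scal fsupp_linear_tens_left]) auto
      show "fsupp_linear (\<lambda>w. F (basis a) w (ee z))" for a unfolding F_def by (rule fsupp_linear_scal_linf)
      show "fsupp_linear (\<lambda>z. F (basis a) (basis b) z)" for a b unfolding F_def
        by (rule fsupp_linear_comp[OF fsupp_linear_scal fsupp_linear_tens_right]) auto
    qed auto
    then show ?thesis using kk by (simp add: F_def counit_idem idem2_def)
  qed
  have "lin (\<lambda>(a, b, c). scal (e b) (basis (a, c))) (phi_G G w j)
      = lincomb G3 (uncurry3 (\<lambda>x y z. inverse (w x y z))) (\<lambda>k. scal (if fst (snd k) = u then 1 else 0) (idem2 (fst k, snd (snd k))))"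
    unfolding phi_G_eq_lincomb lin_lincomb_idem3 by (rule lincomb_cong) (auto simp: on_idem3)
  also have "\<dots> = lincomb G3 (\<lambda>k. if fst (snd k) = u then uncurry3 (\<lambda>x y z. inverse (w x y z)) k else 0) (\<lambda>k. idem2 (fst k, snd (snd k)))"
    unfolding lincomb_def scal_def by (auto intro!: ext sum.cong)
  also have "\<dots> = lincomb G2 (\<lambda>k. uncurry3 (\<lambda>x y z. inverse (w x y z)) (fst k, u, snd k)) (\<lambda>k. idem2 (fst k, snd k))"
    by (subst lincomb_collapse_mid) auto
  also have "\<dots> = lincomb G2 (\<lambda>_. 1) idem2"
    by (rule lincomb_cong) (use W in \<open>auto simp: uncurry3_def normalized_3cocycle_def\<close>)
  also have "\<dots> = tens u u" by (rule sum_idem2)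
  finally show ?thesis .
qed

lemma fsupp_beta_G [simp, intro]: "fsupp (beta_G M u G w j)"
  unfolding beta_G_eq_lincomb by (rule fsupp_lincomb) auto

lemma cocycle_inverse_identity:
  assumes W: "normalized_3cocycle M u G w" and x: "x \<in> G"
  shows "w (gi x) x (gi x) * w x (gi x) x = 1"
proof -
  have "w (gi x) x (gi x) * w x (mul (gi x) x) (gi x) * w x (gi x) x
      = w (mul x (gi x)) x (gi x) * w x (gi x) (mul x (gi x))"
    using W x unfolding normalized_3cocycle_def by (meson gi_in_G)
  then show ?thesis using W x by (simp add: normalized_3cocycle_def)
qed

lemma lin_lincomb_idem3_antidiagonal:
  assumes "\<And>x y z. x \<in> G \<Longrightarrow> y \<in> G \<Longrightarrow> z \<in> G \<Longrightarrow>
      lin T (idem3 (x, y, z)) = scal (if y = gi x \<and> z = x then d x else 0) (V x)"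
  shows "lin T (lincomb G3 c idem3) = lincomb G (\<lambda>x. c (x, gi x, x) * d x) V"
proof -
  have "lin T (lincomb G3 c idem3)
      = lincomb G3 c (\<lambda>k. scal (if fst (snd k) = gi (fst k) \<and> snd (snd k) = fst k then d (fst k) else 0) (V (fst k)))"
    unfolding lin_lincomb_idem3 using assms by (intro lincomb_cong) auto
  also have "\<dots> = lincomb G3 (\<lambda>k. if fst (snd k) = gi (fst k) \<and> snd (snd k) = fst k then c k * d (fst k) else 0) (\<lambda>k. V (fst k))"
    unfolding lincomb_def scal_def by (auto intro!: ext sum.cong)
  also have "\<dots> = lincomb G (\<lambda>x. c (x, gi x, x) * d x) V"
    by (subst lincomb_collapse_graph) auto
  finally show ?thesis .
qed

lemma beta_axiom_idem3:
  assumes x: "x \<in> G" and y: "y \<in> G" and z: "z \<in> G"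
  shows "lin (\<lambda>(a, b, c). mul (mul (mul (mul (basis a) (beta_G M u G w j)) (S b)) u) (basis c)) (idem3 (x, y, z))
       = scal (if y = gi x \<and> z = x then w x (gi x) x else 0) (ee x)"
proof -
  define \<beta> where "\<beta> = beta_G M u G w j"
  have fb: "fsupp \<beta>" unfolding \<beta>_def by simp
  define F where "F v1 v2 v3 = mul (mul (mul (mul v1 \<beta>) (lin S v2)) u) v3" for v1 v2 v3
  have F_basis: "(\<lambda>(a, b, c). mul (mul (mul (mul (basis a) \<beta>) (S b)) u) (basis c)) = (\<lambda>(a, b, c). F (basis a) (basis b) (basis c))"
    by (auto simp: F_def)
  have "lin (\<lambda>(a, b, c). mul (mul (mul (mul (basis a) \<beta>) (S b)) u) (basis c)) (idem3 (x, y, z)) = F (ee x) (ee y) (ee z)"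
    unfolding F_basis idem3_eq
  proof (rule lin_trilinear)
    show "fsupp_linear (\<lambda>v. F v (ee y) (ee z))" unfolding F_def
      by (rule fsupp_linear_comp[OF fsupp_linear_bil_left], rule fsupp_linear_comp[OF fsupp_linear_bil_left],
          rule fsupp_linear_comp[OF fsupp_linear_bil_left], rule fsupp_linear_bil_left) (auto simp: fb)
    show "fsupp_linear (\<lambda>v. F (basis a) v (ee z))" for a unfolding F_def
      by (rule fsupp_linear_comp[OF fsupp_linear_bil_left], rule fsupp_linear_comp[OF fsupp_linear_bil_left],
          rule fsupp_linear_comp[OF fsupp_linear_bil_right], rule fsupp_linear_lin) (auto simp: fb)
    show "fsupp_linear (\<lambda>v. F (basis a) (basis b) v)" for a b unfolding F_def by (rule fsupp_linear_bil_right)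
  qed auto
  also have "\<dots> = scal (if y = gi x \<and> z = x then w x (gi x) x else 0) (ee x)"
  proof -
    have "mul (ee x) \<beta> = scal (w x (gi x) x) (ee x)"
      using x by (simp add: \<beta>_def beta_G_eq_lincomb idem_mul_lincomb)
    moreover have "lin S (ee y) = ee (gi y)" using y by (simp add: antipode_idem)
    moreover have "mul (scal c (ee x)) (ee v) = scal (c * (if x = v then 1 else 0)) (ee x)" if "v \<in> G" for c v
      using x that by (simp add: bil_scal_left idem_orthogonal_scal scal_scal)
    moreover have "x = gi y \<longleftrightarrow> y = gi x" using x y by auto
    ultimately show ?thesis using y z by (auto simp: F_def bil_scal_left eq_commute)
  qed
  finally show ?thesis unfolding \<beta>_def .
qed

lemma phi_G_beta_axiom:
  assumes W: "normalized_3cocycle M u G w"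
  shows "lin (\<lambda>(a, b, c). mul (mul (mul (mul (basis a) (beta_G M u G w j)) (S b)) u) (basis c)) (phi_G G w j) = u"
proof -
  have "lin (\<lambda>(a, b, c). mul (mul (mul (mul (basis a) (beta_G M u G w j)) (S b)) u) (basis c)) (phi_G G w j)
      = lincomb G (\<lambda>x. uncurry3 (\<lambda>x y z. inverse (w x y z)) (x, gi x, x) * w x (gi x) x) ee"
    unfolding phi_G_eq_lincomb by (rule lin_lincomb_idem3_antidiagonal) (rule beta_axiom_idem3)
  also have "\<dots> = lincomb G (\<lambda>_. 1) ee"
    by (rule lincomb_cong) (use W in \<open>auto simp: uncurry3_def normalized_3cocycle_def\<close>)
  finally show ?thesis by (simp add: sum_idem)
qed

lemma psi_axiom_idem3:
  assumes x: "x \<in> G" and y: "y \<in> G" and z: "z \<in> G"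
  shows "lin (\<lambda>(a, b, c). mul (mul (mul (mul (S a) u) (basis b)) (beta_G M u G w j)) (S c)) (idem3 (x, y, z))
       = scal (if y = gi x \<and> z = x then w (gi x) x (gi x) else 0) (ee (gi x))"
proof -
  define \<beta> where "\<beta> = beta_G M u G w j"
  have fb: "fsupp \<beta>" unfolding \<beta>_def by simp
  define F where "F v1 v2 v3 = mul (mul (mul (mul (lin S v1) u) v2) \<beta>) (lin S v3)" for v1 v2 v3
  have F_basis: "(\<lambda>(a, b, c). mul (mul (mul (mul (S a) u) (basis b)) \<beta>) (S c)) = (\<lambda>(a, b, c). F (basis a) (basis b) (basis c))"
    by (auto simp: F_def)
  have "lin (\<lambda>(a, b, c). mul (mul (mul (mul (S a) u) (basis b)) \<beta>) (S c)) (idem3 (x, y, z)) = F (ee x) (ee y) (ee z)"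
    unfolding F_basis idem3_eq
  proof (rule lin_trilinear)
    show "fsupp_linear (\<lambda>v. F v (ee y) (ee z))" unfolding F_def
      by (rule fsupp_linear_comp[OF fsupp_linear_bil_left], rule fsupp_linear_comp[OF fsupp_linear_bil_left],
          rule fsupp_linear_comp[OF fsupp_linear_bil_left], rule fsupp_linear_comp[OF fsupp_linear_bil_left],
          rule fsupp_linear_lin) (auto simp: fb)
    show "fsupp_linear (\<lambda>v. F (basis a) v (ee z))" for a unfolding F_def
      by (rule fsupp_linear_comp[OF fsupp_linear_bil_left], rule fsupp_linear_comp[OF fsupp_linear_bil_left],
          rule fsupp_linear_bil_right) (auto simp: fb)
    show "fsupp_linear (\<lambda>v. F (basis a) (basis b) v)" for a b unfolding F_def
      by (rule fsupp_linear_comp[OF fsupp_linear_bil_right], rule fsupp_linear_lin) auto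
  qed auto
  also have "\<dots> = scal (if y = gi x \<and> z = x then w (gi x) x (gi x) else 0) (ee (gi x))"
  proof -
    have s1: "lin S (ee x) = ee (gi x)" "lin S (ee z) = ee (gi z)" using x z by (simp_all add: antipode_idem)
    have s2: "mul (ee (gi x)) u = ee (gi x)" by simp
    have s3: "mul (ee (gi x)) (ee y) = scal (if gi x = y then 1 else 0) (ee (gi x))"
      using x y by (simp add: idem_orthogonal_scal)
    have "mul (ee (gi x)) \<beta> = scal (w (gi x) x (gi x)) (ee (gi x))"
      using x by (simp add: \<beta>_def beta_G_eq_lincomb idem_mul_lincomb)
    then have s4: "mul (scal c (ee (gi x))) \<beta> = scal (c * w (gi x) x (gi x)) (ee (gi x))" for c
      using fb by (simp add: bil_scal_left scal_scal)
    have s5: "mul (scal c (ee (gi x))) (ee (gi z)) = scal (c * (if gi x = gi z then 1 else 0)) (ee (gi x))" for c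
      using x z by (simp add: bil_scal_left idem_orthogonal_scal scal_scal)
    have "gi x = gi z \<longleftrightarrow> z = x" using x z gi_inj by blast
    then show ?thesis unfolding F_def s1 s2 s3 s4 s5 by (auto simp: eq_commute)
  qed
  finally show ?thesis unfolding \<beta>_def .
qed

lemma psi_axiom:
  assumes W: "normalized_3cocycle M u G w"
  shows "lin (\<lambda>(a, b, c). mul (mul (mul (mul (S a) u) (basis b)) (beta_G M u G w j)) (S c)) (lincomb G3 (uncurry3 w) idem3) = u"
proof -
  have "lin (\<lambda>(a, b, c). mul (mul (mul (mul (S a) u) (basis b)) (beta_G M u G w j)) (S c)) (lincomb G3 (uncurry3 w) idem3)
      = lincomb G (\<lambda>x. uncurry3 w (x, gi x, x) * w (gi x) x (gi x)) (\<lambda>x. ee (gi x))"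
    by (rule lin_lincomb_idem3_antidiagonal) (rule psi_axiom_idem3)
  also have "\<dots> = lincomb G (\<lambda>x. (\<lambda>_. 1) (gi x)) (\<lambda>x. ee (gi x))"
    by (rule lincomb_cong) (use W cocycle_inverse_identity in \<open>auto simp: uncurry3_def mult.commute\<close>)
  also have "\<dots> = lincomb G (\<lambda>_. 1) ee" by (rule lincomb_reindex[OF bij_betw_gi])
  finally show ?thesis by (simp add: sum_idem)
qed

lemma central_lincomb_idem2: "central (M2 M) (lincomb G2 c idem2)"
  by (rule central_lincomb) (auto simp: central_idem2)

lemma central_lincomb_idem3: "central (M3 M) (lincomb G3 c idem3)"
  by (rule central_lincomb) (auto simp: central_idem3)

lemma beta_G_commute: "fsupp v \<Longrightarrow> mul (beta_G M u G w j) v = mul v (beta_G M u G w j)"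
  using central_lincomb[of G ee M "\<lambda>x. w x (gi x) x"] central_idem
  unfolding beta_G_eq_lincomb central_def by auto

lemma phi_G_quasi_coassoc:
  "bil (M3 M) (phi_G G w j) (lin (D_id D) (D h)) = bil (M3 M) (lin (id_D D) (D h)) (phi_G G w j)"
proof -
  have "fsupp (lin (id_D D) (D h))" by auto
  then show ?thesis using central_lincomb_idem3 unfolding coassoc phi_G_eq_lincomb central_def by blast
qed

lemma beta_G_antipode_axiom:
  "lin (\<lambda>(a, b). mul (mul (basis a) (beta_G M u G w j)) (S b)) (D h) = scal (e h) (beta_G M u G w j)"
proof -
  define \<beta> where "\<beta> = beta_G M u G w j"
  have fb: "fsupp \<beta>" unfolding \<beta>_def by simp
  have "lin (\<lambda>(a, b). mul (mul (basis a) \<beta>) (S b)) (D h) = lin (\<lambda>ab. mul \<beta> (mul (basis (fst ab)) (S (snd ab)))) (D h)"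
    by (rule lin_cong) (use fb in \<open>auto simp: \<beta>_def beta_G_commute[symmetric] mul_assoc split_beta\<close>)
  also have "\<dots> = mul \<beta> (lin (\<lambda>ab. mul (basis (fst ab)) (S (snd ab))) (D h))"
    by (rule fsupp_linear_lin_commute[OF fsupp_linear_bil_right, symmetric]) auto
  also have "\<dots> = scal (e h) \<beta>" using antipode_right[of h] fb by (simp add: case_prod_unfold bil_scal_right)
  finally show ?thesis unfolding \<beta>_def .
qed

lemma phi_G_invertible:
  assumes W: "normalized_3cocycle M u G w"
  shows "\<exists>\<psi>. fsupp \<psi> \<and> bil (M3 M) (phi_G G w j) \<psi> = tens u (tens u u)
      \<and> bil (M3 M) \<psi> (phi_G G w j) = tens u (tens u u)
      \<and> lin (\<lambda>(a, b, c). mul (mul (mul (mul (S a) u) (basis b)) (beta_G M u G w j)) (S c)) \<psi> = u"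
proof (intro exI conjI)
  have nz: "\<And>k. k \<in> G3 \<Longrightarrow> uncurry3 w k \<noteq> 0"
    using W by (auto simp: uncurry3_def normalized_3cocycle_def)
  show "fsupp (lincomb G3 (uncurry3 w) idem3)" by (rule fsupp_lincomb_idem3)
  show "bil (M3 M) (phi_G G w j) (lincomb G3 (uncurry3 w) idem3) = tens u (tens u u)"
    unfolding phi_G_eq_lincomb idem3_lincomb_mult sum_idem3[symmetric]
    by (rule lincomb_cong) (use nz in \<open>auto simp: uncurry3_def\<close>)
  show "bil (M3 M) (lincomb G3 (uncurry3 w) idem3) (phi_G G w j) = tens u (tens u u)"
    unfolding phi_G_eq_lincomb idem3_lincomb_mult sum_idem3[symmetric]
    by (rule lincomb_cong) (use nz in \<open>auto simp: uncurry3_def\<close>)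
  show "lin (\<lambda>(a, b, c). mul (mul (mul (mul (S a) u) (basis b)) (beta_G M u G w j)) (S c))
      (lincomb G3 (uncurry3 w) idem3) = u"
    by (rule psi_axiom[OF W])
qed

theorem is_quasi_hopf_twisted:
  assumes W: "normalized_3cocycle M u G w" and S_bij: "lin_bij S"
  shows "is_quasi_hopf M u D e (phi_G G w j) u (beta_G M u G w j) S"
  unfolding is_quasi_hopf_def
proof (intro conjI allI)
  show "is_qb_base M u D e" using H by (simp add: is_hopf_def)
  show "fsupp (phi_G G w j)" unfolding phi_G_eq_lincomb by (rule fsupp_lincomb_idem3)
  show "lin (\<lambda>(a, b). mul (mul (S a) u) (basis b)) (D h) = scal (e h) u" for h
    using antipode_left[of h] by simp
qed (fact fsupp_unit fsupp_beta_G S_bij antipode_antimult antipode_unit phi_G_quasi_coassoc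
  beta_G_antipode_axiom phi_G_counit[OF W] phi_G_beta_axiom[OF W] phi_G_pentagon[OF W] phi_G_invertible[OF W])+

subsection \<open>Gauge transformations built from the idempotents\<close>

lemma fsupp_lincomb_idem2: "fsupp (lincomb G2 c idem2)" by (rule fsupp_lincomb) auto

lemma unit_tens_lincomb_idem2: "(\<lambda>(p, q, r). u p * lincomb G2 c idem2 (q, r)) = lincomb G3 (\<lambda>k. c (snd k)) idem3"
proof -
  have "(\<lambda>(p, q, r). u p * lincomb G2 c idem2 (q, r)) = tens (lincomb G (\<lambda>_. 1) ee) (lincomb G2 c idem2)"
    by (auto simp: tens_def sum_idem intro!: ext)
  also have "\<dots> = lincomb G3 (\<lambda>k. c (snd k)) idem3"
    unfolding tens_lincomb by (rule lincomb_cong) (auto simp: idem3_def)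
  finally show ?thesis .
qed

lemma lin_id_D_lincomb_idem2: "lin (id_D D) (lincomb G2 c idem2) = lincomb G3 (\<lambda>k. c (fst k, mul (fst (snd k)) (snd (snd k)))) idem3"
proof -
  have e: "lin (id_D D) (idem2 k) = lincomb G (\<lambda>_. 1) (\<lambda>a. idem3 (fst k, a, mul (gi a) (snd k)))" if kG: "k \<in> G2" for k
  proof -
    obtain x y where kk: "k = (x, y)" "x \<in> G" "y \<in> G" using kG by (cases k) auto
    show ?thesis unfolding kk idem2_def using kk
      by (simp add: lin_id_D_tens D_idem tens_lincomb_right idem3_def idem2_def)
  qed
  have "lin (id_D D) (lincomb G2 c idem2) = lincomb G2 c (\<lambda>k. lincomb G (\<lambda>_. 1) (\<lambda>a. idem3 (fst k, a, mul (gi a) (snd k))))"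
    by (subst lin_lincomb) (auto intro!: lincomb_cong simp: e)
  also have "\<dots> = lincomb (G2 \<times> G) (\<lambda>ka. c (fst ka) * 1) (\<lambda>ka. idem3 (fst (fst ka), snd ka, mul (gi (snd ka)) (snd (fst ka))))"
    by (rule lincomb_nested_Times)
  also have "\<dots> = lincomb G3 (\<lambda>k. c (fst k, mul (fst (snd k)) (snd (snd k)))) idem3"
    by (rule trans[OF lincomb_cong lincomb_reindex_inverse[where i="\<lambda>k. ((fst k, mul (fst (snd k)) (snd (snd k))), fst (snd k))"]])
       (auto simp: mul_assoc[symmetric])
  finally show ?thesis .
qed

lemma lin_D_id_lincomb_idem2: "lin (D_id D) (lincomb G2 c idem2) = lincomb G3 (\<lambda>k. c (mul (fst k) (fst (snd k)), snd (snd k))) idem3"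
proof -
  have e: "lin (D_id D) (idem2 k) = lincomb G (\<lambda>_. 1) (\<lambda>a. idem3 (a, mul (gi a) (fst k), snd k))" if kG: "k \<in> G2" for k
  proof -
    obtain x y where kk: "k = (x, y)" "x \<in> G" "y \<in> G" using kG by (cases k) auto
    show ?thesis unfolding kk idem2_def using kk
      by (simp add: lin_D_id_tens D_idem tens2r_lincomb_left idem3_def idem2_def tens2r_tens)
  qed
  have "lin (D_id D) (lincomb G2 c idem2) = lincomb G2 c (\<lambda>k. lincomb G (\<lambda>_. 1) (\<lambda>a. idem3 (a, mul (gi a) (fst k), snd k)))"
    by (subst lin_lincomb) (auto intro!: lincomb_cong simp: e)
  also have "\<dots> = lincomb (G2 \<times> G) (\<lambda>ka. c (fst ka) * 1) (\<lambda>ka. idem3 (snd ka, mul (gi (snd ka)) (fst (fst ka)), snd (fst ka)))"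
    by (rule lincomb_nested_Times)
  also have "\<dots> = lincomb G3 (\<lambda>k. c (mul (fst k) (fst (snd k)), snd (snd k))) idem3"
    by (rule trans[OF lincomb_cong lincomb_reindex_inverse[where i="\<lambda>k. ((mul (fst k) (fst (snd k)), snd (snd k)), fst k)"]])
       (auto simp: mul_assoc[symmetric])
  finally show ?thesis .
qed

lemma lincomb_idem2_tens_unit: "(\<lambda>(p, q, r). lincomb G2 c idem2 (p, q) * u r) = lincomb G3 (\<lambda>k. c (fst k, fst (snd k))) idem3"
proof -
  have "(\<lambda>(p, q, r). lincomb G2 c idem2 (p, q) * u r) = tens2r (lincomb G2 c idem2) (lincomb G (\<lambda>_. 1) ee)"
    by (simp add: tens2r_def sum_idem)
  also have "\<dots> = lincomb G2 c (\<lambda>k. lincomb G (\<lambda>_. 1) (\<lambda>z. idem3 (fst k, snd k, z)))"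
    unfolding tens2r_lincomb_left by (rule lincomb_cong[OF refl]) (auto simp: tens2r_lincomb_right idem2_def idem3_def tens2r_tens)
  also have "\<dots> = lincomb (G2 \<times> G) (\<lambda>ka. c (fst ka) * 1) (\<lambda>ka. idem3 (fst (fst ka), snd (fst ka), snd ka))"
    by (rule lincomb_nested_Times)
  also have "\<dots> = lincomb G3 (\<lambda>k. c (fst k, fst (snd k))) idem3"
    by (rule trans[OF lincomb_cong lincomb_reindex_inverse[where i="\<lambda>k. ((fst k, fst (snd k)), snd (snd k))"]])
       auto
  finally show ?thesis .
qed

lemma counit_left_lincomb_idem2: "lin (\<lambda>(a, b). scal (e a) (basis b)) (lincomb G2 c idem2) = lincomb G (\<lambda>y. c (u, y)) ee"
proof -
  have e: "lin (\<lambda>(a, b). scal (e a) (basis b)) (idem2 k) = scal (if fst k = u then 1 else 0) (ee (snd k))" if kG: "k \<in> G2" for k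
  proof -
    obtain x y where kk: "k = (x, y)" "x \<in> G" "y \<in> G" using kG by (cases k) auto
    show ?thesis unfolding kk idem2_def using kk
      by (simp add: lin_tens lin_scal_basis lin_scal_const counit_idem)
  qed
  have "lin (\<lambda>(a, b). scal (e a) (basis b)) (lincomb G2 c idem2) = lincomb G2 c (\<lambda>k. scal (if fst k = u then 1 else 0) (ee (snd k)))"
    by (subst lin_lincomb) (auto intro!: lincomb_cong simp: e)
  also have "\<dots> = lincomb G2 (\<lambda>k. if fst k = u then c k else 0) (\<lambda>k. ee (snd k))"
    unfolding lincomb_def scal_def by (auto intro!: ext sum.cong)
  also have "\<dots> = lincomb G (\<lambda>y. c (u, y)) ee"
    by (subst lincomb_collapse_fst) auto
  finally show ?thesis .
qed

lemma counit_right_lincomb_idem2: "lin (\<lambda>(a, b). scal (e b) (basis a)) (lincomb G2 c idem2) = lincomb G (\<lambda>x. c (x, u)) ee"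
proof -
  have e: "lin (\<lambda>(a, b). scal (e b) (basis a)) (idem2 k) = scal (if snd k = u then 1 else 0) (ee (fst k))" if kG: "k \<in> G2" for k
  proof -
    obtain x y where kk: "k = (x, y)" "x \<in> G" "y \<in> G" using kG by (cases k) auto
    have "lin (\<lambda>(a, b). scal (e b) (basis a)) (tens (ee x) (ee y)) = lin (\<lambda>a. scal (linf e (ee y)) (basis a)) (ee x)"
      by (simp add: lin_tens lin_scal_const)
    also have "\<dots> = scal (linf e (ee y)) (ee x)" by (simp add: lin_scal_basis)
    finally show ?thesis unfolding kk idem2_def using kk by (simp add: counit_idem)
  qed
  have "lin (\<lambda>(a, b). scal (e b) (basis a)) (lincomb G2 c idem2) = lincomb G2 c (\<lambda>k. scal (if snd k = u then 1 else 0) (ee (fst k)))"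
    by (subst lin_lincomb) (auto intro!: lincomb_cong simp: e)
  also have "\<dots> = lincomb G2 (\<lambda>k. if snd k = u then c k else 0) (\<lambda>k. ee (fst k))"
    unfolding lincomb_def scal_def by (auto intro!: ext sum.cong)
  also have "\<dots> = lincomb G (\<lambda>x. c (x, u)) ee"
    by (subst lincomb_collapse_snd) auto
  finally show ?thesis .
qed

lemma gauge_transf_lincomb_idem2:
  assumes nz: "\<And>k. k \<in> G2 \<Longrightarrow> c k \<noteq> 0"
    and left: "\<And>y. y \<in> G \<Longrightarrow> c (u, y) = 1" and right: "\<And>x. x \<in> G \<Longrightarrow> c (x, u) = 1"
  shows "gauge_transf M u e (lincomb G2 c idem2) (lincomb G2 (\<lambda>k. inverse (c k)) idem2)"
  unfolding gauge_transf_def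
proof (intro conjI)
  show "fsupp (lincomb G2 c idem2)" "fsupp (lincomb G2 (\<lambda>k. inverse (c k)) idem2)"
    by (rule fsupp_lincomb_idem2)+
  show "bil (M2 M) (lincomb G2 c idem2) (lincomb G2 (\<lambda>k. inverse (c k)) idem2) = tens u u"
    "bil (M2 M) (lincomb G2 (\<lambda>k. inverse (c k)) idem2) (lincomb G2 c idem2) = tens u u"
    unfolding idem2_lincomb_mult sum_idem2[symmetric] by (rule lincomb_cong, use nz in auto)+
  show "lin (\<lambda>(a, b). scal (e a) (basis b)) (lincomb G2 c idem2) = u"
    unfolding counit_left_lincomb_idem2 by (rule trans[OF lincomb_cong sum_idem]) (auto simp: left)
  show "lin (\<lambda>(a, b). scal (e b) (basis a)) (lincomb G2 c idem2) = u"
    unfolding counit_right_lincomb_idem2 by (rule trans[OF lincomb_cong sum_idem]) (auto simp: right)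
qed

lemma twist_D_central:
  assumes "central (M2 M) F" "fsupp F" "fsupp Finv" "bil (M2 M) F Finv = tens u u"
  shows "twist_D M D F Finv h = D h"
proof -
  have A2: "is_algebra (M2 M) (tens u u)" by (intro tmult_is_algebra algebra_M)
  have "twist_D M D F Finv h = bil (M2 M) (bil (M2 M) (D h) F) Finv"
    using assms(1) by (simp add: twist_D_def central_def)
  also have "\<dots> = D h"
    using assms(2-4) by (simp add: algebra_assoc[OF A2] algebra_unit_right[OF A2])
  finally show ?thesis .
qed

lemma twist_phi_lincomb_idem:
  "twist_phi M u D (lincomb G3 a idem3) (lincomb G2 c idem2) (lincomb G2 (\<lambda>k. inverse (c k)) idem2)
     = lincomb G3 (\<lambda>k. c (snd k) * c (fst k, mul (fst (snd k)) (snd (snd k))) * a k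
         * inverse (c (mul (fst k) (fst (snd k)), snd (snd k))) * inverse (c (fst k, fst (snd k)))) idem3"
  unfolding twist_phi_def unit_tens_lincomb_idem2 lin_id_D_lincomb_idem2 lin_D_id_lincomb_idem2
    lincomb_idem2_tens_unit idem3_lincomb_mult ..

lemma coboundary_normalized:
  assumes W: "normalized_3cocycle M u G w" and W': "normalized_3cocycle M u G w'"
    and nz: "\<And>x y. x \<in> G \<Longrightarrow> y \<in> G \<Longrightarrow> f x y \<noteq> 0"
    and fw: "\<And>x y z. x \<in> G \<Longrightarrow> y \<in> G \<Longrightarrow> z \<in> G \<Longrightarrow>
        w' x y z = w x y z * (f y z * f x (mul y z)) / (f (mul x y) z * f x y)"
    and y: "y \<in> G"
  shows "f u y = f u u" "f y u = f u u"
proof -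
  have "w' u u y = w u u y * (f u y * f u y) / (f u y * f u u)"
    "w' y u u = w y u u * (f u u * f y u) / (f y u * f y u)"
    using fw y by simp_all
  moreover have "w u u y = 1" "w' u u y = 1" "w y u u = 1" "w' y u u = 1"
    using W W' y by (simp_all add: normalized_3cocycle_def)
  moreover have "f u y \<noteq> 0" "f y u \<noteq> 0" "f u u \<noteq> 0" using nz y by auto
  ultimately show "f u y = f u u" "f y u = f u u" by (simp_all add: field_simps)
qed

theorem gauge_equiv_cohomologous:
  assumes W: "normalized_3cocycle M u G w" and W': "normalized_3cocycle M u G w'"
    and C: "cohomologous M G w w'"
  shows "gauge_equiv M u D e (phi_G G w j) D e (phi_G G w' j)"
proof -
  obtain f where nz: "\<And>x y. x \<in> G \<Longrightarrow> y \<in> G \<Longrightarrow> f x y \<noteq> 0"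
    and fw: "\<And>x y z. x \<in> G \<Longrightarrow> y \<in> G \<Longrightarrow> z \<in> G \<Longrightarrow>
        w' x y z = w x y z * (f y z * f x (mul y z)) / (f (mul x y) z * f x y)"
    using C unfolding cohomologous_def by blast
  define c where "c k = f (fst k) (snd k) / f u u" for k
  define F where "F = lincomb G2 c idem2"
  define Finv where "Finv = lincomb G2 (\<lambda>k. inverse (c k)) idem2"
  have c_nz: "k \<in> G2 \<Longrightarrow> c k \<noteq> 0" for k using nz by (auto simp: c_def)
  have "c (u, y) = 1" "c (y, u) = 1" if "y \<in> G" for y
    using coboundary_normalized[where f = f, OF W W' nz fw that] nz[OF unit_in_G unit_in_G] by (simp_all add: c_def)
  then have F: "gauge_transf M u e F Finv"
    unfolding F_def Finv_def using c_nz by (intro gauge_transf_lincomb_idem2)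
  have "twist_phi M u D (phi_G G w' j) F Finv = lincomb G3 (uncurry3 (\<lambda>x y z. inverse (w x y z))) idem3"
    unfolding F_def Finv_def phi_G_eq_lincomb twist_phi_lincomb_idem
    using nz W by (intro lincomb_cong)
      (auto simp: c_def uncurry3_def fw normalized_3cocycle_def field_simps)
  then show ?thesis
  proof (intro gauge_equiv_by_identity[OF F fsupp_M fsupp_unit fsupp_D])
    show "D h = twist_D M D F Finv h" for h
      by (rule twist_D_central[symmetric]) (use F in \<open>auto simp: gauge_transf_def F_def central_lincomb_idem2\<close>)
  qed (simp_all add: phi_G_eq_lincomb fsupp_lincomb_idem3)
qed

end

theorem mainTheorem8:
  fixes M :: "'b \<Rightarrow> 'b \<Rightarrow> 'b vec" and u :: "'b vec"
    and D :: "'b \<Rightarrow> ('b \<times> 'b) vec" and e :: "'b \<Rightarrow> complex" and S :: "'b \<Rightarrow> 'b vec"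
    and G :: "'b vec set"
    and w :: "'b vec \<Rightarrow> 'b vec \<Rightarrow> 'b vec \<Rightarrow> complex"
    and j :: "'b vec \<Rightarrow> 'b vec \<Rightarrow> complex"
  assumes "is_hopf M u D e S"
    and "lin_bij S"
    and "finite_central_subgroup M u D G"
    and "normalized_3cocycle M u G w"
    and "char_iso M G j"
  shows "is_quasi_hopf M u D e (phi_G G w j) u (beta_G M u G w j) S
    \<and> (\<forall>w'. normalized_3cocycle M u G w' \<and> cohomologous M G w w' \<longrightarrow>
          gauge_equiv M u D e (phi_G G w j) D e (phi_G G w' j))"
proof -
  interpret hopf_central_grouplikes M u D e S G j
    by unfold_locales (use assms in auto)
  show ?thesis
    using is_quasi_hopf_twisted[OF assms(4,2)] gauge_equiv_cohomologous[OF assms(4)] by blast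
qed

end
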